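(* Let $\mathcal{P}$ be a hereditary property of ordered graphs. Suppose that for arbitrarily large values of $k$ some ordered graph in $\mathcal{P}$ contains a $k$-structure of Type 1 or of Type 2. Then $|\mathcal{P}_n| \geqslant 2^{n-1}$ for every $n \in \mathbb{N}$.
   Context: Ordered graphs of order $n$ have vertex set $[n]$ with the natural order; a hereditary property is a collection of ordered graphs closed under order-preserving isomorphism and induced ordered subgraphs; $\mathcal{P}_n$ is the set of members with vertex set $[n]$. A $k$-structure of Type 1 in $G$ consists of vertices $y$ and $x_1<\dots<x_{2k}$ with $y<x_1$ or $y>x_{2k}$, such that for $1\leqslant i<2k$, $yx_i\in E(G)$ iff $yx_{i+1}\notin E(G)$. A $k$-structure of Type 2 is one of Type 2(a): vertices $x_1<\dots<x_{2k}<y_1<\dots<y_{2k}$, or of Type 2(b): vertices $x_1<\dots<x_{2k}<y_{2k}<\dots<y_1$, in either case such that for $1\leqslant i<2k$, $x_iy_i\in E(G)$ iff $x_{i+1}y_{i+1}\notin E(G)$. *)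

theory Defs
  imports Main
begin

text \<open>An ordered graph of order n is represented as a pair (n, E): vertex set {1..n}
  with the natural order, E a set of 2-element subsets of {1..n}.\<close>

definition ordered_graph :: "nat \<Rightarrow> nat set set \<Rightarrow> bool" where
  "ordered_graph n E \<longleftrightarrow>
     E \<subseteq> {{u, v} | u v. u \<in> {1..n} \<and> v \<in> {1..n} \<and> u \<noteq> v}"

text \<open>Induced ordered subgraph on the image of an order embedding f : {1..m} -> {1..n},
  relabelled to vertex set {1..m}.\<close>
definition induced_ordered :: "nat set set \<Rightarrow> (nat \<Rightarrow> nat) \<Rightarrow> nat \<Rightarrow> nat set set" where
  "induced_ordered E f m =
     {{u, v} | u v. u \<in> {1..m} \<and> v \<in> {1..m} \<and> u \<noteq> v \<and> {f u, f v} \<in> E}"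

text \<open>Since all graphs of order n live on {1..n}, closure under
  order-preserving isomorphism is automatic in this representation; closure under induced
  ordered subgraphs is closure under restriction along order embeddings.\<close>
definition hereditary :: "(nat \<times> nat set set) set \<Rightarrow> bool" where
  "hereditary P \<longleftrightarrow>
     (\<forall>(n, E) \<in> P. ordered_graph n E) \<and>
     (\<forall>(n, E) \<in> P. \<forall>m f. strict_mono_on {1..m} f \<and> f ` {1..m} \<subseteq> {1..n}
        \<longrightarrow> (m, induced_ordered E f m) \<in> P)"

definition slice :: "(nat \<times> nat set set) set \<Rightarrow> nat \<Rightarrow> nat set set set" where
  "slice P n = {E. (n, E) \<in> P}"

definition kstruct1 :: "nat \<Rightarrow> nat \<Rightarrow> nat set set \<Rightarrow> bool" where
  "kstruct1 k n E \<longleftrightarrow>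
     (\<exists>y x. y \<in> {1..n} \<and> x ` {1..2*k} \<subseteq> {1..n} \<and> strict_mono_on {1..2*k} x \<and>
        (y < x 1 \<or> y > x (2*k)) \<and>
        (\<forall>i \<in> {1..<2*k}. {y, x i} \<in> E \<longleftrightarrow> {y, x (i+1)} \<notin> E))"

definition kstruct2a :: "nat \<Rightarrow> nat \<Rightarrow> nat set set \<Rightarrow> bool" where
  "kstruct2a k n E \<longleftrightarrow>
     (\<exists>x y. x ` {1..2*k} \<subseteq> {1..n} \<and> y ` {1..2*k} \<subseteq> {1..n} \<and>
        strict_mono_on {1..2*k} x \<and> strict_mono_on {1..2*k} y \<and> x (2*k) < y 1 \<and>
        (\<forall>i \<in> {1..<2*k}. {x i, y i} \<in> E \<longleftrightarrow> {x (i+1), y (i+1)} \<notin> E))"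

definition kstruct2b :: "nat \<Rightarrow> nat \<Rightarrow> nat set set \<Rightarrow> bool" where
  "kstruct2b k n E \<longleftrightarrow>
     (\<exists>x y. x ` {1..2*k} \<subseteq> {1..n} \<and> y ` {1..2*k} \<subseteq> {1..n} \<and>
        strict_mono_on {1..2*k} x \<and> strict_antimono_on {1..2*k} y \<and> x (2*k) < y (2*k) \<and>
        (\<forall>i \<in> {1..<2*k}. {x i, y i} \<in> E \<longleftrightarrow> {x (i+1), y (i+1)} \<notin> E))"

definition kstruct2 :: "nat \<Rightarrow> nat \<Rightarrow> nat set set \<Rightarrow> bool" where
  "kstruct2 k n E \<longleftrightarrow> kstruct2a k n E \<or> kstruct2b k n E"

end

theory Submission
  imports Defs "HOL-Library.Ramsey" "HOL-Library.Infinite_Set"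
begin

section \<open>Counting induced subgraphs\<close>

lemma induced_ordered_edge_iff:
  assumes "u \<in> {1..m}" "v \<in> {1..m}" "u \<noteq> v"
  shows "{u, v} \<in> induced_ordered E f m \<longleftrightarrow> {f u, f v} \<in> E"
proof
  assume "{u, v} \<in> induced_ordered E f m"
  then obtain u' v' where "{u, v} = {u', v'}" "{f u', f v'} \<in> E"
    unfolding induced_ordered_def by blast
  then show "{f u, f v} \<in> E"
    by (metis doubleton_eq_iff insert_commute)
qed (use assms in \<open>auto simp: induced_ordered_def\<close>)

lemma hereditary_induced_ordered:
  assumes "hereditary P" "(N, E) \<in> P" "strict_mono_on {1..n} f" "f ` {1..n} \<subseteq> {1..N}"
  shows "(n, induced_ordered E f n) \<in> P"
  using assms unfolding hereditary_def by fast

lemma finite_slice: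
  assumes "hereditary P"
  shows "finite (slice P n)"
proof (rule finite_subset)
  show "slice P n \<subseteq> Pow (Pow {1..n})"
    using assms unfolding slice_def hereditary_def ordered_graph_def by fast
qed simp

lemma card_le_card_slice:
  assumes "hereditary P" "(N, E) \<in> P" "finite F"
    and embedding: "\<And>a. a \<in> F \<Longrightarrow> strict_mono_on {1..n} (f a) \<and> f a ` {1..n} \<subseteq> {1..N}"
    and pattern: "\<And>a u v. a \<in> F \<Longrightarrow> 1 \<le> u \<Longrightarrow> u < v \<Longrightarrow> v \<le> n \<Longrightarrow>
      {f a u, f a v} \<in> E \<longleftrightarrow> R a u v"
    and determined: "\<And>a b. a \<in> F \<Longrightarrow> b \<in> F \<Longrightarrow>
      (\<And>u v. 1 \<le> u \<Longrightarrow> u < v \<Longrightarrow> v \<le> n \<Longrightarrow> R a u v = R b u v) \<Longrightarrow> a = b"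
  shows "card F \<le> card (slice P n)"
proof -
  define G where "G a = induced_ordered E (f a) n" for a
  have "inj_on G F"
  proof (rule inj_onI)
    fix a b assume ab: "a \<in> F" "b \<in> F" "G a = G b"
    show "a = b"
    proof (rule determined[OF ab(1,2)])
      fix u v assume uv: "1 \<le> u" "u < v" "v \<le> n"
      then have "{f a u, f a v} \<in> E \<longleftrightarrow> {f b u, f b v} \<in> E"
        using ab(3) induced_ordered_edge_iff[of u n v E] unfolding G_def by auto
      then show "R a u v = R b u v"
        using pattern ab uv by blast
    qed
  qed
  moreover have "G ` F \<subseteq> slice P n"
    using hereditary_induced_ordered[OF assms(1,2)] embedding unfolding G_def slice_def by blast
  ultimately show ?thesis
    using card_mono[OF finite_slice[OF assms(1)]] card_image by metis
qed

section \<open>Structures of Type 1\<close>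

lemma strict_mono_on_bounds:
  fixes f :: "nat \<Rightarrow> 'a::order"
  assumes "strict_mono_on {1..L} f" "i \<in> {1..L}"
  shows "f 1 \<le> f i \<and> f i \<le> f L"
  using assms(2) strict_mono_onD[OF assms(1), of 1 i] strict_mono_onD[OF assms(1), of i L]
  by (cases "i = 1"; cases "i = L") (auto simp: less_imp_le)

lemma strict_antimono_on_bounds:
  fixes f :: "nat \<Rightarrow> 'a::order"
  assumes "strict_antimono_on {1..L} f" "i \<in> {1..L}"
  shows "f L \<le> f i \<and> f i \<le> f 1"
  using assms unfolding monotone_on_def by (cases "i = 1"; cases "i = L") (auto simp: less_imp_le)

lemma strict_mono_on_cons:
  fixes z :: "nat \<Rightarrow> 'a::order"
  assumes "strict_mono_on {1..m} z" "\<And>i. i \<in> {1..m} \<Longrightarrow> y < z i"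
  shows "strict_mono_on {1..m + 1} (\<lambda>v. if v = 1 then y else z (v - 1))"
    and "(\<lambda>v. if v = 1 then y else z (v - 1)) ` {1..m + 1} = insert y (z ` {1..m})"
proof (rule strict_mono_onI)
  fix r s :: nat assume "r \<in> {1..m + 1}" "s \<in> {1..m + 1}" "r < s"
  moreover have "s - 1 \<in> {1..m}" if "s \<noteq> 1"
    using that \<open>s \<in> {1..m + 1}\<close> by auto
  ultimately show "(if r = 1 then y else z (r - 1)) < (if s = 1 then y else z (s - 1))"
    using assms(2) strict_mono_onD[OF assms(1), of "r - 1" "s - 1"] by auto
next
  have domain: "{1..m + 1} = insert 1 (Suc ` {1..m})"
    by (auto simp: image_iff)
  have "(\<lambda>v. if v = 1 then y else z (v - 1)) ` Suc ` {1..m} = z ` {1..m}"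
    by (force simp: image_image)
  then show "(\<lambda>v. if v = 1 then y else z (v - 1)) ` {1..m + 1} = insert y (z ` {1..m})"
    unfolding domain image_insert by simp
qed

lemma strict_mono_on_snoc:
  fixes z :: "nat \<Rightarrow> 'a::order"
  assumes "strict_mono_on {1..m} z" "\<And>i. i \<in> {1..m} \<Longrightarrow> z i < y"
  shows "strict_mono_on {1..m + 1} (\<lambda>v. if v = m + 1 then y else z v)"
    and "(\<lambda>v. if v = m + 1 then y else z v) ` {1..m + 1} = insert y (z ` {1..m})"
proof (rule strict_mono_onI)
  fix r s :: nat assume "r \<in> {1..m + 1}" "s \<in> {1..m + 1}" "r < s"
  moreover have "r \<in> {1..m}"
    using \<open>r \<in> {1..m + 1}\<close> \<open>r < s\<close> \<open>s \<in> {1..m + 1}\<close> by auto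
  ultimately show "(if r = m + 1 then y else z r) < (if s = m + 1 then y else z s)"
    using assms(2) strict_mono_onD[OF assms(1), of r s] by auto
next
  have "{1..m + 1} = insert (m + 1) {1..m}"
    by auto
  then show "(\<lambda>v. if v = m + 1 then y else z v) ` {1..m + 1} = insert y (z ` {1..m})"
    by auto
qed

lemma alternating_star_subsequences:
  assumes x: "strict_mono_on {1..2*k} x"
    and alt: "\<forall>i\<in>{1..<2*k}. {y, x i} \<in> E \<longleftrightarrow> {y, x (i + 1)} \<notin> E"
  obtains z where "\<And>bs. strict_mono_on {1..k} (z bs)"
    and "\<And>bs i. i \<in> {1..k} \<Longrightarrow> z bs i \<in> x ` {1..2*k}"
    and "\<And>bs i. i \<in> {1..k} \<Longrightarrow> {y, z bs i} \<in> E \<longleftrightarrow> bs ! (i - 1)"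
proof -
  define j where "j bs i = (if bs ! (i - 1) = ({y, x (2*i)} \<in> E) then 2*i else 2*i - 1)"
    for bs :: "bool list" and i
  have j: "j bs i \<in> {2*i - 1..2*i}" for bs i
    unfolding j_def by auto
  show ?thesis
  proof (rule that[of "\<lambda>bs i. x (j bs i)"])
    show "strict_mono_on {1..k} (\<lambda>i. x (j bs i))" for bs
    proof (rule strict_mono_onI)
      fix i i' assume "i \<in> {1..k}" "i' \<in> {1..k}" "i < i'"
      then show "x (j bs i) < x (j bs i')"
        using j[of bs i] j[of bs i'] by (intro strict_mono_onD[OF x]) auto
    qed
    show "x (j bs i) \<in> x ` {1..2*k}" if "i \<in> {1..k}" for bs i
      using j[of bs i] that by auto
    show "{y, x (j bs i)} \<in> E \<longleftrightarrow> bs ! (i - 1)" if "i \<in> {1..k}" for bs i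
    proof -
      have "2*i - 1 \<in> {1..<2*k}" "2*i - 1 + 1 = 2*i"
        using that by auto
      then have "{y, x (2*i - 1)} \<in> E \<longleftrightarrow> {y, x (2*i)} \<notin> E"
        using alt by metis
      then show ?thesis
        unfolding j_def by auto
    qed
  qed
qed

lemma card_bit_lists: "card {bs :: bool list. length bs = m} = 2 ^ m"
  using card_lists_length_eq[of "UNIV :: bool set" m] by simp

lemma finite_bit_lists: "finite {bs :: bool list. length bs = m}"
  using finite_lists_length_eq[of "UNIV :: bool set" m] by simp

lemma card_slice_ge_of_star_first:
  assumes "hereditary P" "(N, E) \<in> P" "y \<in> {1..N}"
    and z: "\<And>bs. length bs = n - 1 \<Longrightarrow>
      strict_mono_on {1..n - 1} (z bs) \<and> z bs ` {1..n - 1} \<subseteq> {y + 1..N}"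
    and edge: "\<And>bs i. length bs = n - 1 \<Longrightarrow> i \<in> {1..n - 1} \<Longrightarrow> {y, z bs i} \<in> E \<longleftrightarrow> bs ! (i - 1)"
    and "1 \<le> n"
  shows "2 ^ (n - 1) \<le> card (slice P n)"
proof -
  define f where "f bs v = (if v = 1 then y else z bs (v - 1))" for bs v
  have "card {bs :: bool list. length bs = n - 1} \<le> card (slice P n)"
  proof (rule card_le_card_slice[OF assms(1,2) finite_bit_lists, where f = f])
    fix bs :: "bool list" assume "bs \<in> {bs. length bs = n - 1}"
    then have "strict_mono_on {1..n - 1} (z bs)" "\<And>i. i \<in> {1..n - 1} \<Longrightarrow> y < z bs i"
      "z bs ` {1..n - 1} \<subseteq> {1..N}"
      using z[of bs] by force+
    then show "strict_mono_on {1..n} (f bs) \<and> f bs ` {1..n} \<subseteq> {1..N}"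
      using strict_mono_on_cons[of "n - 1" "z bs" y] \<open>1 \<le> n\<close> assms(3) unfolding f_def by auto
  next
    fix bs cs :: "bool list" assume "bs \<in> {bs. length bs = n - 1}" "cs \<in> {bs. length bs = n - 1}"
      and same: "\<And>u v. 1 \<le> u \<Longrightarrow> u < v \<Longrightarrow> v \<le> n \<Longrightarrow>
        ({f bs u, f bs v} \<in> E) = ({f cs u, f cs v} \<in> E)"
    show "bs = cs"
    proof (rule nth_equalityI)
      fix i assume "i < length bs"
      then show "bs ! i = cs ! i"
        using same[of 1 "i + 2"] edge[of bs "i + 1"] edge[of cs "i + 1"] \<open>bs \<in> _\<close> \<open>cs \<in> _\<close>
        unfolding f_def by auto
    qed (use \<open>bs \<in> _\<close> \<open>cs \<in> _\<close> in simp)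
  qed simp
  then show ?thesis
    by (simp add: card_bit_lists)
qed

lemma card_slice_ge_of_star_last:
  assumes "hereditary P" "(N, E) \<in> P" "y \<in> {1..N}"
    and z: "\<And>bs. length bs = n - 1 \<Longrightarrow>
      strict_mono_on {1..n - 1} (z bs) \<and> z bs ` {1..n - 1} \<subseteq> {1..y - 1}"
    and edge: "\<And>bs i. length bs = n - 1 \<Longrightarrow> i \<in> {1..n - 1} \<Longrightarrow> {y, z bs i} \<in> E \<longleftrightarrow> bs ! (i - 1)"
    and "1 \<le> n"
  shows "2 ^ (n - 1) \<le> card (slice P n)"
proof -
  define f where "f bs v = (if v = n then y else z bs v)" for bs v
  have "card {bs :: bool list. length bs = n - 1} \<le> card (slice P n)"
  proof (rule card_le_card_slice[OF assms(1,2) finite_bit_lists, where f = f])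
    fix bs :: "bool list" assume "bs \<in> {bs. length bs = n - 1}"
    then have "strict_mono_on {1..n - 1} (z bs)" "\<And>i. i \<in> {1..n - 1} \<Longrightarrow> z bs i < y"
      "z bs ` {1..n - 1} \<subseteq> {1..N}"
      using z[of bs] assms(3) by force+
    then show "strict_mono_on {1..n} (f bs) \<and> f bs ` {1..n} \<subseteq> {1..N}"
      using strict_mono_on_snoc[of "n - 1" "z bs" y] \<open>1 \<le> n\<close> assms(3) unfolding f_def by auto
  next
    fix bs cs :: "bool list" assume "bs \<in> {bs. length bs = n - 1}" "cs \<in> {bs. length bs = n - 1}"
      and same: "\<And>u v. 1 \<le> u \<Longrightarrow> u < v \<Longrightarrow> v \<le> n \<Longrightarrow>
        ({f bs u, f bs v} \<in> E) = ({f cs u, f cs v} \<in> E)"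
    show "bs = cs"
    proof (rule nth_equalityI)
      fix i assume "i < length bs"
      then show "bs ! i = cs ! i"
        using same[of "i + 1" n] edge[of bs "i + 1"] edge[of cs "i + 1"] \<open>bs \<in> _\<close> \<open>cs \<in> _\<close>
        unfolding f_def by (auto simp: insert_commute)
    qed (use \<open>bs \<in> _\<close> \<open>cs \<in> _\<close> in simp)
  qed simp
  then show ?thesis
    by (simp add: card_bit_lists)
qed

lemma card_slice_ge_of_kstruct1:
  assumes "hereditary P" "(N, E) \<in> P" "kstruct1 k N E" "1 \<le> n" "n \<le> k + 1"
  shows "2 ^ (n - 1) \<le> card (slice P n)"
proof -
  obtain y x where y: "y \<in> {1..N}" and x: "x ` {1..2*k} \<subseteq> {1..N}" "strict_mono_on {1..2*k} x"
    and side: "y < x 1 \<or> x (2*k) < y"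
    and alt: "\<forall>i\<in>{1..<2*k}. {y, x i} \<in> E \<longleftrightarrow> {y, x (i + 1)} \<notin> E"
    using assms(3) unfolding kstruct1_def by blast
  obtain z where z: "\<And>bs. strict_mono_on {1..k} (z bs)"
    "\<And>bs i. i \<in> {1..k} \<Longrightarrow> z bs i \<in> x ` {1..2*k}"
    and edge: "\<And>bs i. i \<in> {1..k} \<Longrightarrow> {y, z bs i} \<in> E \<longleftrightarrow> bs ! (i - 1)"
    using alternating_star_subsequences[OF x(2) alt] by blast
  have "{1..n - 1} \<subseteq> {1..k}"
    using assms(5) by auto
  then have mono: "strict_mono_on {1..n - 1} (z bs)" for bs
    using z(1) by (rule monotone_on_subset[rotated])
  have bounds: "z bs i \<in> {1..N} \<and> x 1 \<le> z bs i \<and> z bs i \<le> x (2*k)"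
    if i: "i \<in> {1..n - 1}" for bs i
  proof -
    obtain j where "j \<in> {1..2*k}" "z bs i = x j"
      using z(2)[of i bs] i \<open>{1..n - 1} \<subseteq> {1..k}\<close> by blast
    then show ?thesis
      using x(1) strict_mono_on_bounds[OF x(2), of j] by (auto simp: image_subset_iff)
  qed
  have edge': "{y, z bs i} \<in> E \<longleftrightarrow> bs ! (i - 1)" if "i \<in> {1..n - 1}" for bs i
    using edge that \<open>{1..n - 1} \<subseteq> {1..k}\<close> by blast
  from side show ?thesis
  proof
    assume "y < x 1"
    show ?thesis
    proof (rule card_slice_ge_of_star_first[OF assms(1,2) y _ edge' assms(4)])
      have "z bs i \<in> {y + 1..N}" if "i \<in> {1..n - 1}" for bs i
        using bounds[OF that, of bs] \<open>y < x 1\<close> by auto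
      then have "z bs ` {1..n - 1} \<subseteq> {y + 1..N}" for bs
        by blast
      then show "strict_mono_on {1..n - 1} (z bs) \<and> z bs ` {1..n - 1} \<subseteq> {y + 1..N}" for bs
        using mono by blast
    qed
  next
    assume "x (2*k) < y"
    show ?thesis
    proof (rule card_slice_ge_of_star_last[OF assms(1,2) y _ edge' assms(4)])
      have "z bs i \<in> {1..y - 1}" if "i \<in> {1..n - 1}" for bs i
        using bounds[OF that, of bs] \<open>x (2*k) < y\<close> by auto
      then have "z bs ` {1..n - 1} \<subseteq> {1..y - 1}" for bs
        by blast
      then show "strict_mono_on {1..n - 1} (z bs) \<and> z bs ` {1..n - 1} \<subseteq> {1..y - 1}" for bs
        using mono by blast
    qed
  qed
qed

section \<open>Gluing two homogeneous chains\<close>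

lemma mult_add_less_mult_add_iff:
  fixes K a a' b b' :: nat
  assumes "b < K" "b' < K"
  shows "K * a + b < K * a' + b' \<longleftrightarrow> a < a' \<or> a = a' \<and> b < b'"
proof -
  have below: "K * c + d < K * c'" if "c < c'" "d < K" for c c' d :: nat
  proof -
    have "K * (c + 1) \<le> K * c'"
      using that(1) by (intro mult_le_mono2) simp
    then show ?thesis
      using that(2) by simp
  qed
  show ?thesis
    using below[of a a' b] below[of a' a b'] assms by (cases a a' rule: linorder_cases) auto
qed

lemma mult_add_eq_mult_add_iff:
  fixes K a a' b b' :: nat
  assumes "b < K" "b' < K"
  shows "K * a + b = K * a' + b' \<longleftrightarrow> a = a' \<and> b = b'"
  using mult_add_less_mult_add_iff[OF assms] mult_add_less_mult_add_iff[OF assms(2,1)]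
  by (metis less_irrefl linorder_neqE_nat)

definition count_upto :: "nat set \<Rightarrow> nat \<Rightarrow> nat" where
  "count_upto A i = card (A \<inter> {1..i})"

lemma count_upto_mono: "i \<le> j \<Longrightarrow> count_upto A i \<le> count_upto A j"
  unfolding count_upto_def by (intro card_mono) auto

lemma count_upto_less:
  assumes "i < j" "j \<in> A"
  shows "count_upto A i < count_upto A j"
proof -
  have "j \<in> A \<inter> {1..j}" "j \<notin> A \<inter> {1..i}"
    using assms by auto
  moreover have "A \<inter> {1..i} \<subseteq> A \<inter> {1..j}"
    using assms(1) by auto
  ultimately have "A \<inter> {1..i} \<subset> A \<inter> {1..j}"
    by blast
  then show ?thesis
    unfolding count_upto_def by (intro psubset_card_mono) auto
qed

lemma count_upto_image:
  assumes "A \<subseteq> {1..L}"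
  shows "count_upto A ` A = {1..card A}"
proof (rule card_subset_eq)
  have "finite A"
    using assms finite_subset by blast
  have "count_upto A a \<in> {1..card A}" if "a \<in> A" for a
  proof -
    have "a \<in> A \<inter> {1..a}"
      using that assms by auto
    then have "0 < card (A \<inter> {1..a})"
      by (auto simp: card_gt_0_iff)
    moreover have "card (A \<inter> {1..a}) \<le> card A"
      using \<open>finite A\<close> by (intro card_mono) auto
    ultimately show ?thesis
      unfolding count_upto_def by simp
  qed
  then show "count_upto A ` A \<subseteq> {1..card A}"
    by blast
  have "inj_on (count_upto A) A"
    by (rule inj_onI) (metis count_upto_less less_irrefl linorder_neqE_nat)
  then show "card (count_upto A ` A) = card {1..card A}"
    by (simp add: card_image)
qed simp

definition tail_index :: "bool \<Rightarrow> nat \<Rightarrow> nat \<Rightarrow> nat \<Rightarrow> nat" where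
  "tail_index asc p n v = (if asc then v - p else n + 1 - v)"

lemma bij_betw_tail_index: "bij_betw (tail_index asc p n) {p + 1..n} {1..n - p}"
proof (cases asc)
  case True
  have "bij_betw (\<lambda>v. v - p) {p + 1..n} {1..n - p}"
    by (rule bij_betw_byWitness[where f' = "\<lambda>j. j + p"]) auto
  then show ?thesis
    using True unfolding tail_index_def by simp
next
  case False
  have "bij_betw (\<lambda>v. n + 1 - v) {p + 1..n} {1..n - p}"
    by (rule bij_betw_byWitness[where f' = "\<lambda>j. n + 1 - j"]) auto
  then show ?thesis
    using False unfolding tail_index_def by simp
qed

lemma tail_index_surj:
  assumes "j \<in> {1..n - p}"
  obtains v where "v \<in> {p + 1..n}" "tail_index asc p n v = j"
  using assms bij_betw_tail_index[of asc p n] by (metis bij_betw_iff_bijections)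

lemma tail_index_less_iff:
  "v \<in> {p + 1..n} \<Longrightarrow> w \<in> {p + 1..n} \<Longrightarrow> v < w \<Longrightarrow>
    tail_index asc p n v < tail_index asc p n w \<longleftrightarrow> asc"
  unfolding tail_index_def by auto

locale homogeneous_chains =
  fixes asc :: bool and E :: "nat set set" and N M :: nat and X Y :: "nat \<Rightarrow> nat"
    and xx yy xy yx :: bool
  assumes X_range: "X ` {1..M} \<subseteq> {1..N}" and Y_range: "Y ` {1..M} \<subseteq> {1..N}"
    and X_mono: "strict_mono_on {1..M} X"
    and Y_mono: "if asc then strict_mono_on {1..M} Y else strict_antimono_on {1..M} Y"
    and X_less_Y: "a \<in> {1..M} \<Longrightarrow> b \<in> {1..M} \<Longrightarrow> X a < Y b"
    and XX_edge: "a \<in> {1..M} \<Longrightarrow> b \<in> {1..M} \<Longrightarrow> a < b \<Longrightarrow> {X a, X b} \<in> E \<longleftrightarrow> xx"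
    and YY_edge: "a \<in> {1..M} \<Longrightarrow> b \<in> {1..M} \<Longrightarrow> a < b \<Longrightarrow> {Y a, Y b} \<in> E \<longleftrightarrow> yy"
    and XY_edge: "a \<in> {1..M} \<Longrightarrow> b \<in> {1..M} \<Longrightarrow> a < b \<Longrightarrow> {X a, Y b} \<in> E \<longleftrightarrow> xy"
    and YX_edge: "a \<in> {1..M} \<Longrightarrow> b \<in> {1..M} \<Longrightarrow> a < b \<Longrightarrow> {X b, Y a} \<in> E \<longleftrightarrow> yx"
begin

text \<open>The first \<open>p\<close> vertices are taken from the \<open>X\<close>-chain at positions \<open>px\<close>, the others
  from the \<open>Y\<close>-chain at positions \<open>py\<close>, read along the direction of the \<open>Y\<close>-chain.\<close>

definition glue :: "nat \<Rightarrow> nat \<Rightarrow> (nat \<Rightarrow> nat) \<Rightarrow> (nat \<Rightarrow> nat) \<Rightarrow> nat \<Rightarrow> nat" where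
  "glue n p px py v = (if v \<le> p then X (px v) else Y (py (tail_index asc p n v)))"

context
  fixes n p :: nat and px py :: "nat \<Rightarrow> nat"
  assumes p_le: "p \<le> n"
    and px: "strict_mono_on {1..p} px" "px ` {1..p} \<subseteq> {1..M}"
    and py: "strict_mono_on {1..n - p} py" "py ` {1..n - p} \<subseteq> {1..M}"
begin

lemma px_mem: "u \<in> {1..p} \<Longrightarrow> px u \<in> {1..M}"
  using px(2) by blast

lemma py_tail_mem: "v \<in> {p + 1..n} \<Longrightarrow> py (tail_index asc p n v) \<in> {1..M}"
  using py(2) bij_betw_apply[OF bij_betw_tail_index] by blast

lemma glue_tail_mono:
  assumes "v \<in> {p + 1..n}" "w \<in> {p + 1..n}" "v < w"
  shows "Y (py (tail_index asc p n v)) < Y (py (tail_index asc p n w))"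
proof -
  let ?i = "tail_index asc p n v" and ?j = "tail_index asc p n w"
  have ij: "?i \<in> {1..n - p}" "?j \<in> {1..n - p}"
    using assms bij_betw_apply[OF bij_betw_tail_index] by blast+
  have "?i \<noteq> ?j"
    using assms bij_betw_tail_index[THEN bij_betw_imp_inj_on] by (metis inj_onD less_irrefl)
  then have "py ?i < py ?j \<longleftrightarrow> asc"
    using tail_index_less_iff[OF assms] strict_mono_onD[OF py(1)] ij
    by (metis linorder_neqE_nat less_asym)
  moreover have "py ?i \<noteq> py ?j"
    using \<open>?i \<noteq> ?j\<close> strict_mono_onD[OF py(1)] ij by (metis linorder_neqE_nat less_irrefl)
  moreover note mem = py_tail_mem[OF assms(1)] py_tail_mem[OF assms(2)]
  ultimately show ?thesis
  proof (cases asc)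
    case True
    then show ?thesis
      using Y_mono mem \<open>py ?i < py ?j \<longleftrightarrow> asc\<close> by (simp add: strict_mono_onD)
  next
    case False
    then have "py ?j < py ?i"
      using \<open>py ?i < py ?j \<longleftrightarrow> asc\<close> \<open>py ?i \<noteq> py ?j\<close> by simp
    then show ?thesis
      using Y_mono mem False by (simp add: monotone_on_def)
  qed
qed

lemma glue_embedding:
  "strict_mono_on {1..n} (glue n p px py)" "glue n p px py ` {1..n} \<subseteq> {1..N}"
proof -
  have tail: "tail_index asc p n v \<in> {1..n - p}" if "v \<in> {p + 1..n}" for v
    using that bij_betw_apply[OF bij_betw_tail_index] by blast
  show "strict_mono_on {1..n} (glue n p px py)"
  proof (rule strict_mono_onI)
    fix u v assume uv: "u \<in> {1..n}" "v \<in> {1..n}" "u < v"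
    consider "v \<le> p" | "u \<le> p" "p < v" | "p < u"
      by linarith
    then show "glue n p px py u < glue n p px py v"
    proof cases
      case 1
      then show ?thesis
        unfolding glue_def using uv px strict_mono_onD[OF X_mono] strict_mono_onD[OF px(1)]
        by (auto simp: image_subset_iff)
    next
      case 2
      then show ?thesis
        unfolding glue_def using uv px py(2) tail X_less_Y by (auto simp: image_subset_iff)
    next
      case 3
      then show ?thesis
        unfolding glue_def using uv glue_tail_mono by auto
    qed
  qed
  show "glue n p px py ` {1..n} \<subseteq> {1..N}"
    unfolding glue_def using px(2) py(2) tail X_range Y_range by (force simp: image_subset_iff)
qed

lemma glue_edge:
  assumes "1 \<le> u" "u < v" "v \<le> n"
  shows "{glue n p px py u, glue n p px py v} \<in> E \<longleftrightarrow>
    (if v \<le> p then xx else if p < u then yy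
     else if px u < py (tail_index asc p n v) then xy
     else if py (tail_index asc p n v) < px u then yx
     else {X (px u), Y (py (tail_index asc p n v))} \<in> E)"
proof -
  have tail: "tail_index asc p n w \<in> {1..n - p}" if "w \<in> {p + 1..n}" for w
    using that bij_betw_apply[OF bij_betw_tail_index] by blast
  consider "v \<le> p" | "u \<le> p" "p < v" | "p < u"
    by linarith
  then show ?thesis
  proof cases
    case 1
    then show ?thesis
      unfolding glue_def using assms px XX_edge strict_mono_onD[OF px(1)]
      by (auto simp: image_subset_iff)
  next
    case 2
    then have "px u \<in> {1..M}" "py (tail_index asc p n v) \<in> {1..M}"
      using assms px_mem py_tail_mem by auto
    then show ?thesis
      unfolding glue_def using 2 XY_edge YX_edge by (auto simp: insert_commute)
  next
    case 3
    let ?i = "tail_index asc p n u" and ?j = "tail_index asc p n v"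
    have "py ?i \<in> {1..M}" "py ?j \<in> {1..M}"
      using assms 3 py_tail_mem by auto
    moreover have "Y (py ?i) < Y (py ?j)"
      using glue_tail_mono assms 3 by auto
    ultimately have "{Y (py ?i), Y (py ?j)} \<in> E \<longleftrightarrow> yy"
      using YY_edge[of "py ?i" "py ?j"] YY_edge[of "py ?j" "py ?i"] Y_mono
      by (cases "py ?i" "py ?j" rule: linorder_cases)
        (auto simp: insert_commute strict_mono_onD monotone_on_def split: if_splits)
    then show ?thesis
      unfolding glue_def using 3 assms by auto
  qed
qed

end

end

definition threshold_configs :: "nat \<Rightarrow> nat \<Rightarrow> (nat \<times> nat list) set" where
  "threshold_configs a n =
    {(p, ls). 1 \<le> p \<and> p \<le> n \<and> length ls = n - p \<and> sorted ls \<and> set ls \<subseteq> {a..p - 1 + a}}"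

lemma finite_threshold_configs: "finite (threshold_configs a n)"
proof (rule finite_subset)
  show "threshold_configs a n \<subseteq> {..n} \<times> {ls. set ls \<subseteq> {..n + a} \<and> length ls \<le> n}"
    unfolding threshold_configs_def by force
  show "finite ({..n} \<times> {ls. set ls \<subseteq> {..n + a} \<and> length ls \<le> n})"
    by (simp add: finite_lists_length_le)
qed

lemma card_threshold_configs_Suc:
  assumes "1 \<le> n"
  shows "2 * card (threshold_configs a n) \<le> card (threshold_configs a (Suc n))"
proof -
  let ?C = "threshold_configs a"
  define top where "top = (\<lambda>(p, ls). (p, ls @ [p - 1 + a]))"
  define new where "new = (\<lambda>(p :: nat, ls :: nat list). (p + 1, ls))"
  have "top ` ?C n \<subseteq> ?C (Suc n)" "new ` ?C n \<subseteq> ?C (Suc n)"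
    unfolding top_def new_def threshold_configs_def by (force simp: subset_iff sorted_append)+
  moreover have "top ` ?C n \<inter> new ` ?C n = {}"
    unfolding top_def new_def threshold_configs_def by auto
  moreover have "inj_on top (?C n)" "inj_on new (?C n)"
    unfolding top_def new_def by (auto simp: inj_on_def)
  ultimately show ?thesis
    using card_Un_disjoint[of "top ` ?C n" "new ` ?C n"] card_image
      card_mono[OF finite_threshold_configs, of "top ` ?C n \<union> new ` ?C n" a "Suc n"]
      finite_threshold_configs
    by (metis finite_imageI le_sup_iff mult_2)
qed

lemma card_threshold_configs:
  assumes "1 \<le> n"
  shows "2 ^ (n - 1) \<le> card (threshold_configs a n)"
  using assms
proof (induction n rule: dec_induct)
  case base
  have "(1, []) \<in> threshold_configs a 1"
    unfolding threshold_configs_def by simp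
  then show ?case
    using card_mono[OF finite_threshold_configs, of "{(1, [])}" a 1] by simp
next
  case (step n)
  then show ?case
    using card_threshold_configs_Suc[of n a] by (cases n) auto
qed

lemma threshold_config_value:
  assumes "(p, ls) \<in> threshold_configs a n" "v \<in> {p + 1..n}"
  shows "ls ! (tail_index asc p n v - 1) \<in> {a..p - 1 + a}"
proof -
  have "tail_index asc p n v \<in> {1..n - p}"
    using assms(2) bij_betw_apply[OF bij_betw_tail_index] by blast
  then have "ls ! (tail_index asc p n v - 1) \<in> set ls"
    using assms(1) unfolding threshold_configs_def by (intro nth_mem) auto
  then show ?thesis
    using assms(1) unfolding threshold_configs_def by blast
qed

lemma threshold_keys:
  assumes "(p, ls) \<in> threshold_configs a n" "a \<le> 1" "n < K" "K * n + n \<le> M"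
  shows "strict_mono_on {1..p} ((*) K)" "((*) K) ` {1..p} \<subseteq> {1..M}"
    and "strict_mono_on {1..n - p} (\<lambda>j. K * ls ! (j - 1) + j)"
    "(\<lambda>j. K * ls ! (j - 1) + j) ` {1..n - p} \<subseteq> {1..M}"
proof -
  have cfg: "p \<le> n" "length ls = n - p" "sorted ls" "set ls \<subseteq> {a..p - 1 + a}" "1 \<le> p"
    using assms(1) unfolding threshold_configs_def by auto
  show "strict_mono_on {1..p} ((*) K)"
    by (rule strict_mono_onI, rule mult_strict_left_mono) (use assms(3) in auto)
  have "K * u \<in> {1..M}" if "u \<in> {1..p}" for u
  proof -
    have "K * u \<le> K * n"
      using that cfg(1) by simp
    then have "K * u \<le> M"
      using assms(4) by linarith
    then show ?thesis
      using that assms(3) by (auto simp: Suc_le_eq)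
  qed
  then show "((*) K) ` {1..p} \<subseteq> {1..M}"
    by blast
  show "strict_mono_on {1..n - p} (\<lambda>j. K * ls ! (j - 1) + j)"
  proof (rule strict_mono_onI)
    fix i j assume ij: "i \<in> {1..n - p}" "j \<in> {1..n - p}" "i < j"
    then have "ls ! (i - 1) \<le> ls ! (j - 1)"
      using cfg(2,3) by (intro sorted_nth_mono) auto
    then show "K * ls ! (i - 1) + i < K * ls ! (j - 1) + j"
      using ij assms(3) mult_add_less_mult_add_iff[of i K j] by auto
  qed
  have "K * ls ! (j - 1) + j \<in> {1..M}" if "j \<in> {1..n - p}" for j
  proof -
    have "ls ! (j - 1) \<in> set ls"
      using that cfg(2) by (intro nth_mem) auto
    then have "ls ! (j - 1) \<in> {a..p - 1 + a}"
      using cfg(4) by blast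
    then have "ls ! (j - 1) \<le> n"
      using cfg assms(2) by auto
    then have "K * ls ! (j - 1) \<le> K * n" "j \<le> n"
      using that by (auto intro: mult_le_mono2)
    then have "K * ls ! (j - 1) + j \<le> M"
      using assms(4) by linarith
    then show ?thesis
      using that by simp
  qed
  then show "(\<lambda>j. K * ls ! (j - 1) + j) ` {1..n - p} \<subseteq> {1..M}"
    by blast
qed

lemma threshold_key_less_iff:
  fixes j n p K u l :: nat
  assumes "j \<in> {1..n - p}" "n < K"
  shows "K * u < K * l + j \<longleftrightarrow> u \<le> l" and "K * l + j < K * u \<longleftrightarrow> l < u"
    and "K * u \<noteq> K * l + j"
proof -
  have "j < K" "0 < j"
    using assms by auto
  then show "K * u < K * l + j \<longleftrightarrow> u \<le> l" "K * l + j < K * u \<longleftrightarrow> l < u"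
    using mult_add_less_mult_add_iff[of 0 K j u l] mult_add_less_mult_add_iff[of j K 0 l u] by auto
  then show "K * u \<noteq> K * l + j"
    by (metis le_less_linear less_irrefl)
qed

context homogeneous_chains
begin

text \<open>A configuration \<open>(p, ls)\<close> takes \<open>p\<close> vertices from the \<open>X\<close>-chain and places the \<open>j\<close>-th
  vertex taken from the \<open>Y\<close>-chain right after the first \<open>ls ! (j - 1)\<close> of them.\<close>

definition threshold_embedding :: "nat \<Rightarrow> nat \<times> nat list \<Rightarrow> nat \<Rightarrow> nat" where
  "threshold_embedding n =
    (\<lambda>(p, ls). glue n p ((*) (n + 1)) (\<lambda>j. (n + 1) * ls ! (j - 1) + j))"

definition threshold_pattern :: "nat \<Rightarrow> nat \<times> nat list \<Rightarrow> nat \<Rightarrow> nat \<Rightarrow> bool" where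
  "threshold_pattern n = (\<lambda>(p, ls) u v.
    if v \<le> p then xx else if p < u then yy
    else if u \<le> ls ! (tail_index asc p n v - 1) then xy else yx)"

lemma threshold_embedding:
  assumes "(p, ls) \<in> threshold_configs a n" "a \<le> 1" "(n + 1) * (n + 1) \<le> M"
  shows "strict_mono_on {1..n} (threshold_embedding n (p, ls))"
    and "threshold_embedding n (p, ls) ` {1..n} \<subseteq> {1..N}"
    and "1 \<le> u \<Longrightarrow> u < v \<Longrightarrow> v \<le> n \<Longrightarrow>
      {threshold_embedding n (p, ls) u, threshold_embedding n (p, ls) v} \<in> E \<longleftrightarrow>
      threshold_pattern n (p, ls) u v"
proof -
  have "p \<le> n"
    using assms(1) unfolding threshold_configs_def by auto
  have "(n + 1) * n + n \<le> M"
    using assms(3) by (simp add: algebra_simps)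
  note keys = threshold_keys[OF assms(1,2) less_add_one this]
  note glue = glue_embedding[OF \<open>p \<le> n\<close> keys] glue_edge[OF \<open>p \<le> n\<close> keys]
  have emb: "threshold_embedding n (p, ls) =
      glue n p ((*) (n + 1)) (\<lambda>j. (n + 1) * ls ! (j - 1) + j)"
    unfolding threshold_embedding_def by (simp only: prod.case)
  show "strict_mono_on {1..n} (threshold_embedding n (p, ls))"
    unfolding emb by (rule glue(1))
  show "threshold_embedding n (p, ls) ` {1..n} \<subseteq> {1..N}"
    unfolding emb by (rule glue(2))
  assume uv: "1 \<le> u" "u < v" "v \<le> n"
  show "{threshold_embedding n (p, ls) u, threshold_embedding n (p, ls) v} \<in> E \<longleftrightarrow>
      threshold_pattern n (p, ls) u v"
  proof (cases "u \<le> p \<and> p < v")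
    case True
    then have "tail_index asc p n v \<in> {1..n - p}"
      using uv bij_betw_apply[OF bij_betw_tail_index] by simp
    note less = threshold_key_less_iff[OF this less_add_one, of u "ls ! (tail_index asc p n v - 1)"]
    show ?thesis
      using glue(3)[OF uv] True less unfolding emb threshold_pattern_def by auto
  next
    case False
    then show ?thesis
      using glue(3)[OF uv] unfolding emb threshold_pattern_def by auto
  qed
qed

lemma threshold_pattern_separates_sizes:
  assumes "xy \<noteq> yx" "a = (if xx = xy then 0 else 1)"
    and c: "(p, ls) \<in> threshold_configs a n" "(p', ls') \<in> threshold_configs a n" "p < p'"
  obtains u v where "1 \<le> u" "u < v" "v \<le> n"
    "threshold_pattern n (p, ls) u v \<noteq> threshold_pattern n (p', ls') u v"
proof -
  have "1 \<le> p" "p' \<in> {p + 1..n}"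
    using c unfolding threshold_configs_def by auto
  note l = threshold_config_value[where asc = asc, OF c(1) this(2)]
  show ?thesis
  proof (cases "xx = xy")
    case True
    then have "\<not> p \<le> ls ! (tail_index asc p n p' - 1)"
      using l \<open>1 \<le> p\<close> assms(2) by auto
    then show ?thesis
      using that[of p p'] True \<open>1 \<le> p\<close> \<open>p' \<in> {p + 1..n}\<close> assms(1)
      unfolding threshold_pattern_def by auto
  next
    case False
    then show ?thesis
      using that[of 1 p'] l \<open>1 \<le> p\<close> \<open>p' \<in> {p + 1..n}\<close> assms(2)
      unfolding threshold_pattern_def by auto
  qed
qed

lemma threshold_pattern_separates_lists:
  assumes "xy \<noteq> yx" "a \<le> 1"
    and c: "(p, ls) \<in> threshold_configs a n" "(p, ls') \<in> threshold_configs a n"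
    and "v \<in> {p + 1..n}" "ls ! (tail_index asc p n v - 1) < ls' ! (tail_index asc p n v - 1)"
  shows "threshold_pattern n (p, ls) (ls' ! (tail_index asc p n v - 1)) v \<noteq>
    threshold_pattern n (p, ls') (ls' ! (tail_index asc p n v - 1)) v"
proof -
  let ?u = "ls' ! (tail_index asc p n v - 1)"
  have "?u \<in> {a..p - 1 + a}" "1 \<le> p"
    using threshold_config_value[where asc = asc, OF c(2) assms(5)] c(2) unfolding threshold_configs_def by auto
  then have "?u \<le> p"
    using assms(2) by auto
  then show ?thesis
    using assms(1,5,6) unfolding threshold_pattern_def by auto
qed

lemma threshold_pattern_determines_list:
  assumes "xy \<noteq> yx" "a \<le> 1"
    and c: "(p, ls) \<in> threshold_configs a n" "(p, ls') \<in> threshold_configs a n"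
    and same: "\<And>u v. 1 \<le> u \<Longrightarrow> u < v \<Longrightarrow> v \<le> n \<Longrightarrow>
      threshold_pattern n (p, ls) u v = threshold_pattern n (p, ls') u v"
  shows "ls = ls'"
proof (rule nth_equalityI)
  show "length ls = length ls'"
    using c unfolding threshold_configs_def by simp
  fix j assume "j < length ls"
  then have "j + 1 \<in> {1..n - p}"
    using c(1) unfolding threshold_configs_def by auto
  then obtain v where v: "v \<in> {p + 1..n}" "tail_index asc p n v = j + 1"
    by (rule tail_index_surj)
  have no_smaller: False
    if ms: "(p, ms) \<in> threshold_configs a n" "(p, ms') \<in> threshold_configs a n"
      and "ms ! j < ms' ! j"
      and "\<And>u. 1 \<le> u \<Longrightarrow> u < v \<Longrightarrow>
        threshold_pattern n (p, ms) u v = threshold_pattern n (p, ms') u v"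
    for ms ms'
  proof -
    have "ms' ! j \<in> {a..p - 1 + a}" "1 \<le> p"
      using threshold_config_value[where asc = asc, OF ms(2) v(1)] ms(2) v(2)
      unfolding threshold_configs_def by auto
    then have "1 \<le> ms' ! j" "ms' ! j < v"
      using \<open>ms ! j < ms' ! j\<close> v(1) assms(2) by auto
    then show False
      using threshold_pattern_separates_lists[OF assms(1,2) ms v(1)] that(4) v(2)
        \<open>ms ! j < ms' ! j\<close> by auto
  qed
  show "ls ! j = ls' ! j"
    using no_smaller[OF c] no_smaller[OF c(2,1)] same[of _ v] v(1)
    by (metis atLeastAtMost_iff linorder_neqE_nat less_imp_le_nat less_le_trans)
qed

lemma threshold_pattern_determines:
  assumes "xy \<noteq> yx" "a = (if xx = xy then 0 else 1)"
    and c: "(p, ls) \<in> threshold_configs a n" "(p', ls') \<in> threshold_configs a n"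
    and same: "\<And>u v. 1 \<le> u \<Longrightarrow> u < v \<Longrightarrow> v \<le> n \<Longrightarrow>
      threshold_pattern n (p, ls) u v = threshold_pattern n (p', ls') u v"
  shows "(p, ls) = (p', ls')"
proof -
  have "p = p'"
  proof (rule ccontr)
    assume "p \<noteq> p'"
    then consider "p < p'" | "p' < p"
      by linarith
    then show False
    proof cases
      case 1
      then obtain u v where "1 \<le> u" "u < v" "v \<le> n"
        "threshold_pattern n (p, ls) u v \<noteq> threshold_pattern n (p', ls') u v"
        using threshold_pattern_separates_sizes[OF assms(1,2) c] by blast
      then show False
        using same by blast
    next
      case 2
      then obtain u v where "1 \<le> u" "u < v" "v \<le> n"
        "threshold_pattern n (p', ls') u v \<noteq> threshold_pattern n (p, ls) u v"
        using threshold_pattern_separates_sizes[OF assms(1,2) c(2,1)] by blast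
      then show False
        using same by metis
    qed
  qed
  moreover have "ls = ls'"
    using threshold_pattern_determines_list[OF assms(1) _ c(1)] c(2) same assms(2) \<open>p = p'\<close> by simp
  ultimately show ?thesis
    by simp
qed

lemma card_slice_ge_threshold:
  assumes "hereditary P" "(N, E) \<in> P" "xy \<noteq> yx" "1 \<le> n" "(n + 1) * (n + 1) \<le> M"
  shows "2 ^ (n - 1) \<le> card (slice P n)"
proof -
  define a :: nat where "a = (if xx = xy then 0 else 1)"
  have "card (threshold_configs a n) \<le> card (slice P n)"
  proof (rule card_le_card_slice[OF assms(1,2) finite_threshold_configs])
    fix c assume "c \<in> threshold_configs a n"
    moreover obtain p ls where "c = (p, ls)"
      by fastforce
    moreover have "a \<le> 1"
      unfolding a_def by simp
    ultimately show "strict_mono_on {1..n} (threshold_embedding n c) \<and>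
        threshold_embedding n c ` {1..n} \<subseteq> {1..N}"
      "\<And>u v. 1 \<le> u \<Longrightarrow> u < v \<Longrightarrow> v \<le> n \<Longrightarrow>
        {threshold_embedding n c u, threshold_embedding n c v} \<in> E \<longleftrightarrow> threshold_pattern n c u v"
      using threshold_embedding[OF _ _ assms(5)] by blast+
  qed (use threshold_pattern_determines[OF assms(3) a_def] in fast)
  then show ?thesis
    using card_threshold_configs[OF assms(4)] by (rule order_trans[rotated])
qed

end

lemma count_upto_le: "count_upto A i \<le> i"
  unfolding count_upto_def using card_mono[of "{1..i}" "A \<inter> {1..i}"] by simp

lemma count_upto_pos: "i \<in> A \<Longrightarrow> 1 \<le> i \<Longrightarrow> 1 \<le> count_upto A i"
  using count_upto_less[of 0 i A] by (simp add: count_upto_def)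

definition matching_config :: "nat \<Rightarrow> nat \<Rightarrow> nat set \<Rightarrow> nat set \<Rightarrow> bool" where
  "matching_config n p A B \<longleftrightarrow> p \<le> n \<and> A \<subseteq> {1..p} \<and> B \<subseteq> {1..n - p} \<and> card A = card B"

text \<open>Positions in a chain: the \<open>c\<close>-th element of \<open>A\<close> gets position \<open>K * c\<close>, and the elements
  after it that are not in \<open>A\<close> are squeezed in before position \<open>K * (c + 1)\<close>.\<close>

definition match_key :: "nat \<Rightarrow> nat set \<Rightarrow> (nat \<Rightarrow> nat) \<Rightarrow> nat \<Rightarrow> nat" where
  "match_key K A off i = K * count_upto A i + (if i \<in> A then 0 else off i)"

lemma match_key_strict_mono:
  assumes "strict_mono_on {1..L} off" "\<And>i. i \<in> {1..L} \<Longrightarrow> off i < K"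
  shows "strict_mono_on {1..L} (match_key K A off)"
proof (rule strict_mono_onI)
  fix i j assume ij: "i \<in> {1..L}" "j \<in> {1..L}" "i < j"
  let ?r = "\<lambda>i. if i \<in> A then 0 else off i"
  have "count_upto A i < count_upto A j \<or> count_upto A i = count_upto A j \<and> ?r i < ?r j"
  proof (cases "j \<in> A")
    case True
    then show ?thesis
      using count_upto_less[OF ij(3)] by simp
  next
    case False
    have "off i < off j"
      using strict_mono_onD[OF assms(1) ij] .
    then have "?r i < ?r j"
      using False by auto
    then show ?thesis
      using count_upto_mono[of i j A] ij(3) by (auto simp: le_less)
  qed
  moreover have "?r i < K" "?r j < K"
    using assms(2)[OF ij(1)] assms(2)[OF ij(2)] by auto
  ultimately show "match_key K A off i < match_key K A off j"
    unfolding match_key_def using mult_add_less_mult_add_iff by blast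
qed

lemma match_key_range:
  assumes "i \<in> {1..L}" "L \<le> n" "\<And>i. i \<in> {1..L} \<Longrightarrow> off i \<in> {1..n}"
    "(n + 1) * (n + 1) \<le> M"
  shows "match_key (n + 1) A off i \<in> {1..M}"
proof -
  have "count_upto A i \<le> n"
    using count_upto_le[of A i] assms(1,2) by simp
  then have "(n + 1) * count_upto A i \<le> (n + 1) * n"
    by (rule mult_le_mono2)
  moreover have "off i \<in> {1..n}"
    using assms(1,3) by blast
  ultimately have "match_key (n + 1) A off i \<le> (n + 1) * n + n"
    unfolding match_key_def by auto
  moreover have "(n + 1) * n + n \<le> M"
    using assms(4) by (simp add: algebra_simps)
  moreover have "1 \<le> match_key (n + 1) A off i"
    using count_upto_pos[of i A] \<open>off i \<in> {1..n}\<close> assms(1) unfolding match_key_def by auto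
  ultimately show ?thesis
    by simp
qed

lemma match_key_embedding:
  assumes "L \<le> n" "strict_mono_on {1..L} off" "\<And>i. i \<in> {1..L} \<Longrightarrow> off i \<in> {1..n}"
    "(n + 1) * (n + 1) \<le> M"
  shows "strict_mono_on {1..L} (match_key (n + 1) A off)"
    and "match_key (n + 1) A off ` {1..L} \<subseteq> {1..M}"
proof -
  show "strict_mono_on {1..L} (match_key (n + 1) A off)"
    using assms(3) by (intro match_key_strict_mono[OF assms(2)]) fastforce
  have "match_key (n + 1) A off i \<in> {1..M}" if "i \<in> {1..L}" for i
    by (rule match_key_range[OF that assms(1)]) (use assms(3,4) in auto)
  then show "match_key (n + 1) A off ` {1..L} \<subseteq> {1..M}"
    by blast
qed

lemma match_key_eq_iff:
  assumes "\<And>i. i \<in> {1..L} \<Longrightarrow> off i \<in> {1..n}" "\<And>j. j \<in> {1..L'} \<Longrightarrow> off' j \<in> {1..n}"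
    and "i \<in> {1..L}" "j \<in> {1..L'}" "off i \<noteq> off' j"
  shows "match_key (n + 1) A off i = match_key (n + 1) B off' j \<longleftrightarrow>
    i \<in> A \<and> j \<in> B \<and> count_upto A i = count_upto B j"
proof -
  have "(if i \<in> A then 0 else off i) < n + 1" "(if j \<in> B then 0 else off' j) < n + 1"
    using assms(1)[OF assms(3)] assms(2)[OF assms(4)] by auto
  moreover have "(if i \<in> A then 0 else off i) = (if j \<in> B then 0 else off' j) \<longleftrightarrow> i \<in> A \<and> j \<in> B"
    using assms(1)[OF assms(3)] assms(2)[OF assms(4)] assms(5) by auto
  ultimately show ?thesis
    unfolding match_key_def using mult_add_eq_mult_add_iff by blast
qed

lemma matching_config_split:
  assumes "S \<subseteq> {1..L}" "L \<le> n" "p = L - card S"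
  shows "matching_config n p (S \<inter> {1..p}) (tail_index asc p n ` ({p + 1..L} - S))"
proof -
  have "finite S" "card S \<le> L"
    using assms(1) finite_subset card_mono[OF _ assms(1)] by auto
  have inj: "inj_on (tail_index asc p n) ({p + 1..L} - S)"
    by (rule inj_on_subset[OF bij_betw_imp_inj_on[OF bij_betw_tail_index]]) (use assms(2) in auto)
  have "S = (S \<inter> {1..p}) \<union> (S \<inter> {p + 1..L})"
    using assms(1) by auto
  then have "card S = card ((S \<inter> {1..p}) \<union> (S \<inter> {p + 1..L}))"
    by (rule arg_cong)
  also have "\<dots> = card (S \<inter> {1..p}) + card (S \<inter> {p + 1..L})"
    using \<open>finite S\<close> by (intro card_Un_disjoint) auto
  finally have "card (S \<inter> {1..p}) + card (S \<inter> {p + 1..L}) = card S"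
    by simp
  moreover have "card ({p + 1..L} - S) + card (S \<inter> {p + 1..L}) = L - p"
    using card_Diff_subset_Int[of "{p + 1..L}" S] card_mono[of "{p + 1..L}" "S \<inter> {p + 1..L}"]
    by (simp add: Int_commute)
  ultimately have "card (S \<inter> {1..p}) = card (tail_index asc p n ` ({p + 1..L} - S))"
    using card_image[OF inj] \<open>card S \<le> L\<close> assms(3) by simp
  moreover have "tail_index asc p n ` ({p + 1..L} - S) \<subseteq> {1..n - p}"
    using bij_betw_apply[OF bij_betw_tail_index] assms(2) by fastforce
  ultimately show ?thesis
    unfolding matching_config_def using assms by auto
qed

lemma matching_config_split_recover:
  assumes "S \<subseteq> {1..L}" "L \<le> n"
  shows "S = (S \<inter> {1..p}) \<union>
    {v \<in> {p + 1..L}. tail_index asc p n v \<notin> tail_index asc p n ` ({p + 1..L} - S)}"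
proof -
  have "inj_on (tail_index asc p n) {p + 1..L}"
    by (rule inj_on_subset[OF bij_betw_imp_inj_on[OF bij_betw_tail_index]]) (use assms(2) in auto)
  then have tail: "tail_index asc p n v \<in> tail_index asc p n ` ({p + 1..L} - S) \<longleftrightarrow> v \<notin> S"
    if "v \<in> {p + 1..L}" for v
    using that by (auto dest: inj_onD)
  show ?thesis
  proof (rule set_eqI)
    fix v
    show "v \<in> S \<longleftrightarrow> v \<in> (S \<inter> {1..p}) \<union>
      {v \<in> {p + 1..L}. tail_index asc p n v \<notin> tail_index asc p n ` ({p + 1..L} - S)}"
    proof (cases "v \<in> {p + 1..L}")
      case True
      then show ?thesis
        using tail[OF True] by auto
    next
      case False
      then show ?thesis
        using assms(1) by auto
    qed
  qed
qed

lemma matching_config_halves: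
  assumes "U \<subseteq> {1..n}" "p \<le> n" "even (card U)" "count_upto U p = card U div 2"
  shows "matching_config n p (U \<inter> {1..p}) (tail_index asc p n ` (U \<inter> {p + 1..n}))"
proof -
  have inj: "inj_on (tail_index asc p n) (U \<inter> {p + 1..n})"
    by (rule inj_on_subset[OF bij_betw_imp_inj_on[OF bij_betw_tail_index]]) auto
  have "U = (U \<inter> {1..p}) \<union> (U \<inter> {p + 1..n})"
    using assms(1) by auto
  then have "card U = card ((U \<inter> {1..p}) \<union> (U \<inter> {p + 1..n}))"
    by (rule arg_cong)
  also have "\<dots> = card (U \<inter> {1..p}) + card (U \<inter> {p + 1..n})"
    by (intro card_Un_disjoint) auto
  finally have split: "card U = card (U \<inter> {1..p}) + card (U \<inter> {p + 1..n})" .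
  obtain k where "card U = 2 * k"
    using assms(3) by blast
  moreover have "card (U \<inter> {1..p}) = card U div 2"
    using assms(4) unfolding count_upto_def by simp
  ultimately have "card (U \<inter> {1..p}) = k"
    by simp
  then have "card (U \<inter> {1..p}) = card (U \<inter> {p + 1..n})"
    using split \<open>card U = 2 * k\<close> by linarith
  then have "card (U \<inter> {1..p}) = card (tail_index asc p n ` (U \<inter> {p + 1..n}))"
    using card_image[OF inj] by simp
  moreover have "tail_index asc p n ` (U \<inter> {p + 1..n}) \<subseteq> {1..n - p}"
    using bij_betw_apply[OF bij_betw_tail_index] by fastforce
  ultimately show ?thesis
    using assms(2) unfolding matching_config_def by auto
qed

locale matching_chains = homogeneous_chains +
  assumes yx_eq_xy: "yx = xy"
    and diagonal_edge: "a \<in> {1..M} \<Longrightarrow> {X a, Y a} \<in> E \<longleftrightarrow> \<not> xy"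
begin

definition matched :: "nat \<Rightarrow> nat \<Rightarrow> nat set \<Rightarrow> nat set \<Rightarrow> nat \<Rightarrow> nat \<Rightarrow> bool" where
  "matched n p A B u v \<longleftrightarrow>
    u \<in> A \<and> tail_index asc p n v \<in> B \<and> count_upto A u = count_upto B (tail_index asc p n v)"

definition matching_embedding :: "nat \<Rightarrow> nat \<Rightarrow> nat set \<Rightarrow> nat set \<Rightarrow> nat \<Rightarrow> nat" where
  "matching_embedding n p A B =
    glue n p (match_key (n + 1) A (\<lambda>u. u)) (match_key (n + 1) B (\<lambda>j. p + j))"

definition matching_pattern :: "nat \<Rightarrow> nat \<Rightarrow> nat set \<Rightarrow> nat set \<Rightarrow> nat \<Rightarrow> nat \<Rightarrow> bool" where
  "matching_pattern n p A B u v =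
    (if v \<le> p then xx else if p < u then yy else if matched n p A B u v then \<not> xy else xy)"

lemma matching_embedding:
  assumes "matching_config n p A B" "(n + 1) * (n + 1) \<le> M"
  shows "strict_mono_on {1..n} (matching_embedding n p A B)"
    and "matching_embedding n p A B ` {1..n} \<subseteq> {1..N}"
    and "1 \<le> u \<Longrightarrow> u < v \<Longrightarrow> v \<le> n \<Longrightarrow>
      {matching_embedding n p A B u, matching_embedding n p A B v} \<in> E \<longleftrightarrow>
      matching_pattern n p A B u v"
proof -
  have "p \<le> n"
    using assms(1) unfolding matching_config_def by simp
  have off: "\<And>u. u \<in> {1..p} \<Longrightarrow> u \<in> {1..n}" "\<And>j. j \<in> {1..n - p} \<Longrightarrow> p + j \<in> {1..n}"
    using \<open>p \<le> n\<close> by auto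
  have px: "strict_mono_on {1..p} (match_key (n + 1) A (\<lambda>u. u))"
    "match_key (n + 1) A (\<lambda>u. u) ` {1..p} \<subseteq> {1..M}"
    by (rule match_key_embedding[OF \<open>p \<le> n\<close> _ _ assms(2)]; use off in \<open>auto intro: strict_mono_onI\<close>)+
  have py: "strict_mono_on {1..n - p} (match_key (n + 1) B (\<lambda>j. p + j))"
    "match_key (n + 1) B (\<lambda>j. p + j) ` {1..n - p} \<subseteq> {1..M}"
    by (rule match_key_embedding[OF _ _ _ assms(2)]; use off in \<open>auto intro: strict_mono_onI\<close>)+
  note glue = glue_embedding[OF \<open>p \<le> n\<close> px py] glue_edge[OF \<open>p \<le> n\<close> px py]
  show "strict_mono_on {1..n} (matching_embedding n p A B)"
    "matching_embedding n p A B ` {1..n} \<subseteq> {1..N}"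
    using glue(1,2) unfolding matching_embedding_def by simp_all
  assume uv: "1 \<le> u" "u < v" "v \<le> n"
  show "{matching_embedding n p A B u, matching_embedding n p A B v} \<in> E \<longleftrightarrow>
      matching_pattern n p A B u v"
  proof (cases "u \<le> p \<and> p < v")
    case True
    let ?j = "tail_index asc p n v"
    have "?j \<in> {1..n - p}"
      using True uv bij_betw_apply[OF bij_betw_tail_index] by simp
    then have "match_key (n + 1) A (\<lambda>u. u) u = match_key (n + 1) B (\<lambda>j. p + j) ?j \<longleftrightarrow>
        matched n p A B u v"
      unfolding matched_def using match_key_eq_iff[OF off, where i = u and j = "tail_index asc p n v" and A = A and B = B]
          True uv by auto
    moreover have "match_key (n + 1) A (\<lambda>u. u) u \<in> {1..M}"
      using px(2) True uv by (simp add: image_subset_iff)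
    ultimately show ?thesis
      using glue(3)[OF uv] True diagonal_edge yx_eq_xy
      unfolding matching_embedding_def matching_pattern_def by (auto simp: linorder_neq_iff)
  next
    case False
    then show ?thesis
      using glue(3)[OF uv] unfolding matching_embedding_def matching_pattern_def by auto
  qed
qed

lemma matched_partner:
  assumes "matching_config n p A B"
  shows "u \<in> A \<Longrightarrow> \<exists>v\<in>{p + 1..n}. matched n p A B u v"
    and "v \<in> {p + 1..n} \<Longrightarrow> tail_index asc p n v \<in> B \<Longrightarrow> \<exists>u\<in>{1..p}. matched n p A B u v"
proof -
  have A: "A \<subseteq> {1..p}" and B: "B \<subseteq> {1..n - p}" and "card A = card B"
    using assms unfolding matching_config_def by auto
  then have same_counts: "count_upto A ` A = count_upto B ` B"
    using count_upto_image[OF A] count_upto_image[OF B] by simp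
  show "\<exists>v\<in>{p + 1..n}. matched n p A B u v" if "u \<in> A"
  proof -
    have "count_upto A u \<in> count_upto B ` B"
      using same_counts \<open>u \<in> A\<close> by blast
    then obtain j where "j \<in> B" "count_upto B j = count_upto A u"
      by (auto simp: image_iff)
    moreover obtain v where "v \<in> {p + 1..n}" "tail_index asc p n v = j"
      using tail_index_surj \<open>j \<in> B\<close> B by blast
    ultimately show ?thesis
      using \<open>u \<in> A\<close> unfolding matched_def by auto
  qed
  show "\<exists>u\<in>{1..p}. matched n p A B u v" if "tail_index asc p n v \<in> B"
  proof -
    have "count_upto B (tail_index asc p n v) \<in> count_upto A ` A"
      using same_counts that by blast
    then obtain u where "u \<in> A" "count_upto A u = count_upto B (tail_index asc p n v)"
      by (auto simp: image_iff)
    then show ?thesis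
      using that A unfolding matched_def by auto
  qed
qed

lemma matching_config_sets:
  assumes "matching_config n p A B"
  shows "A = {u \<in> {1..p}. \<exists>v\<in>{p + 1..n}. matched n p A B u v}"
    and "B = tail_index asc p n ` {v \<in> {p + 1..n}. \<exists>u\<in>{1..p}. matched n p A B u v}"
proof -
  have A: "A \<subseteq> {1..p}" and B: "B \<subseteq> {1..n - p}"
    using assms unfolding matching_config_def by auto
  show "A = {u \<in> {1..p}. \<exists>v\<in>{p + 1..n}. matched n p A B u v}"
    using A matched_partner(1)[OF assms] unfolding matched_def by auto
  show "B = tail_index asc p n ` {v \<in> {p + 1..n}. \<exists>u\<in>{1..p}. matched n p A B u v}"
  proof
    show "B \<subseteq> tail_index asc p n ` {v \<in> {p + 1..n}. \<exists>u\<in>{1..p}. matched n p A B u v}"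
    proof
      fix j assume "j \<in> B"
      then obtain v where "v \<in> {p + 1..n}" "tail_index asc p n v = j"
        using tail_index_surj B by blast
      then show "j \<in> tail_index asc p n ` {v \<in> {p + 1..n}. \<exists>u\<in>{1..p}. matched n p A B u v}"
        using matched_partner(2)[OF assms] \<open>j \<in> B\<close> by blast
    qed
  qed (auto simp: matched_def)
qed

lemma matching_pattern_determines_sets:
  assumes "matching_config n p A B" "matching_config n p A' B'"
    and "\<And>u v. 1 \<le> u \<Longrightarrow> u < v \<Longrightarrow> v \<le> n \<Longrightarrow>
      matching_pattern n p A B u v = matching_pattern n p A' B' u v"
  shows "A = A'" "B = B'"
proof -
  have same: "matched n p A B u v \<longleftrightarrow> matched n p A' B' u v"
    if "u \<in> {1..p}" "v \<in> {p + 1..n}" for u v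
    using assms(3)[of u v] that unfolding matching_pattern_def by (auto split: if_splits)
  have "A = {u \<in> {1..p}. \<exists>v\<in>{p + 1..n}. matched n p A B u v}"
    by (rule matching_config_sets(1)[OF assms(1)])
  also have "\<dots> = {u \<in> {1..p}. \<exists>v\<in>{p + 1..n}. matched n p A' B' u v}"
    using same by blast
  also have "\<dots> = A'"
    by (rule matching_config_sets(1)[OF assms(2), symmetric])
  finally show "A = A'" .
  have "B = tail_index asc p n ` {v \<in> {p + 1..n}. \<exists>u\<in>{1..p}. matched n p A B u v}"
    by (rule matching_config_sets(2)[OF assms(1)])
  also have "\<dots> = tail_index asc p n ` {v \<in> {p + 1..n}. \<exists>u\<in>{1..p}. matched n p A' B' u v}"
    using same by blast
  also have "\<dots> = B'"
    by (rule matching_config_sets(2)[OF assms(2), symmetric])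
  finally show "B = B'" .
qed

lemma card_slice_ge_matching_family:
  assumes "hereditary P" "(N, E) \<in> P" "(n + 1) * (n + 1) \<le> M" "finite F"
    and config: "\<And>S. S \<in> F \<Longrightarrow> matching_config n (p S) (A S) (B S)"
    and determined: "\<And>S S'. S \<in> F \<Longrightarrow> S' \<in> F \<Longrightarrow>
      (\<And>u v. 1 \<le> u \<Longrightarrow> u < v \<Longrightarrow> v \<le> n \<Longrightarrow>
        matching_pattern n (p S) (A S) (B S) u v = matching_pattern n (p S') (A S') (B S') u v) \<Longrightarrow>
      S = S'"
  shows "card F \<le> card (slice P n)"
  using matching_embedding[OF config assms(3)]
  by (intro card_le_card_slice[OF assms(1,2,4), where R = "\<lambda>S. matching_pattern n (p S) (A S) (B S)"])
    (auto intro: determined)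

lemma matching_split_determines:
  assumes "S \<subseteq> {1..L}" "S' \<subseteq> {1..L}" "L \<le> n" "card S = card S'"
    and same: "\<And>u v. 1 \<le> u \<Longrightarrow> u < v \<Longrightarrow> v \<le> n \<Longrightarrow>
      matching_pattern n (L - card S) (S \<inter> {1..L - card S})
        (tail_index asc (L - card S) n ` ({L - card S + 1..L} - S)) u v =
      matching_pattern n (L - card S') (S' \<inter> {1..L - card S'})
        (tail_index asc (L - card S') n ` ({L - card S' + 1..L} - S')) u v"
  shows "S = S'"
proof -
  define p where "p = L - card S"
  have p': "L - card S' = p"
    using assms(4) unfolding p_def by simp
  note config = matching_config_split[OF assms(1,3) p_def, where asc = asc]
    matching_config_split[OF assms(2,3) p'[symmetric], where asc = asc]
  have "S \<inter> {1..p} = S' \<inter> {1..p}"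
    "tail_index asc p n ` ({p + 1..L} - S) = tail_index asc p n ` ({p + 1..L} - S')"
    using matching_pattern_determines_sets[OF config] same unfolding p' p_def[symmetric] by auto
  then show ?thesis
    using matching_config_split_recover[OF assms(1,3), of p asc]
      matching_config_split_recover[OF assms(2,3), of p asc] by metis
qed

text \<open>If \<open>xx \<noteq> xy\<close>, an unmatched first vertex reveals \<open>p\<close> as the number of vertices it
  is joined to by \<open>xx\<close>-pairs.\<close>

lemma card_slice_ge_matching_first_unmatched:
  assumes "hereditary P" "(N, E) \<in> P" "1 \<le> n" "(n + 1) * (n + 1) \<le> M" "xx \<noteq> xy"
  shows "2 ^ (n - 1) \<le> card (slice P n)"
proof -
  define p where "p S = n - card S" for S :: "nat set"
  define A where "A S = S \<inter> {1..p S}" for S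
  define B where "B S = tail_index asc (p S) n ` ({p S + 1..n} - S)" for S
  have S: "S \<subseteq> {1..n}" "1 \<le> p S" "p S \<le> n" "1 \<notin> A S" if "S \<in> Pow {2..n}" for S
  proof -
    have "card S \<le> card {2..n}"
      using that by (intro card_mono) auto
    then show "S \<subseteq> {1..n}" "1 \<le> p S" "p S \<le> n" "1 \<notin> A S"
      using that assms(3) unfolding p_def A_def by auto
  qed
  have config: "matching_config n (p S) (A S) (B S)" if "S \<in> Pow {2..n}" for S
    using S[OF that] unfolding p_def A_def B_def by (intro matching_config_split) auto
  have not_less: "\<not> p S < p S'"
    if "S \<in> Pow {2..n}" "S' \<in> Pow {2..n}"
      and "\<And>u v. 1 \<le> u \<Longrightarrow> u < v \<Longrightarrow> v \<le> n \<Longrightarrow>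
        matching_pattern n (p S) (A S) (B S) u v = matching_pattern n (p S') (A S') (B S') u v"
    for S S'
  proof
    assume "p S < p S'"
    then show False
      using that(3)[of 1 "p S'"] S[OF that(1)] S[OF that(2)] assms(5)
      unfolding matching_pattern_def matched_def by auto
  qed
  have "card (Pow {2..n}) \<le> card (slice P n)"
  proof (rule card_slice_ge_matching_family[OF assms(1,2,4) _ config])
    fix S S' assume SS': "S \<in> Pow {2..n}" "S' \<in> Pow {2..n}"
      and same: "\<And>u v. 1 \<le> u \<Longrightarrow> u < v \<Longrightarrow> v \<le> n \<Longrightarrow>
        matching_pattern n (p S) (A S) (B S) u v = matching_pattern n (p S') (A S') (B S') u v"
    have "p S = p S'"
      using not_less[OF SS' same] not_less[OF SS'(2,1)] same by (metis linorder_neqE_nat)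
    then have "card S = card S'"
      using S[OF SS'(1)] S[OF SS'(2)] unfolding p_def by auto
    then show "S = S'"
      using matching_split_determines[OF S(1)[OF SS'(1)] S(1)[OF SS'(2)] order_refl] same
      unfolding p_def A_def B_def by blast
  qed simp
  then show ?thesis
    by (simp add: card_Pow)
qed

text \<open>Symmetrically, if \<open>yy \<noteq> xy\<close>, an unmatched last vertex reveals \<open>p\<close>.\<close>

lemma card_slice_ge_matching_last_unmatched:
  assumes "hereditary P" "(N, E) \<in> P" "1 \<le> n" "(n + 1) * (n + 1) \<le> M" "yy \<noteq> xy"
  shows "2 ^ (n - 1) \<le> card (slice P n)"
proof -
  define p where "p S = n - 1 - card S" for S :: "nat set"
  define A where "A S = S \<inter> {1..p S}" for S
  define B where "B S = tail_index asc (p S) n ` ({p S + 1..n - 1} - S)" for S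
  have config: "matching_config n (p S) (A S) (B S)" if "S \<in> Pow {1..n - 1}" for S
    using that unfolding p_def A_def B_def by (intro matching_config_split) auto
  have last: "p S < n" "tail_index asc (p S) n n \<notin> B S" for S
  proof -
    show "p S < n"
      using assms(3) unfolding p_def by auto
    then have "n \<notin> {p S + 1..n - 1} - S" "n \<in> {p S + 1..n}" "{p S + 1..n - 1} - S \<subseteq> {p S + 1..n}"
      by auto
    then show "tail_index asc (p S) n n \<notin> B S"
      using bij_betw_imp_inj_on[OF bij_betw_tail_index] unfolding B_def by (metis inj_on_image_mem_iff)
  qed
  have not_less: "\<not> p S < p S'"
    if "\<And>u v. 1 \<le> u \<Longrightarrow> u < v \<Longrightarrow> v \<le> n \<Longrightarrow>
      matching_pattern n (p S) (A S) (B S) u v = matching_pattern n (p S') (A S') (B S') u v"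
    for S S'
  proof
    assume "p S < p S'"
    then show False
      using that[of "p S'" n] last[of S'] assms(5) unfolding matching_pattern_def matched_def by auto
  qed
  have "card (Pow {1..n - 1}) \<le> card (slice P n)"
  proof (rule card_slice_ge_matching_family[OF assms(1,2,4) _ config])
    fix S S' assume SS': "S \<in> Pow {1..n - 1}" "S' \<in> Pow {1..n - 1}"
      and same: "\<And>u v. 1 \<le> u \<Longrightarrow> u < v \<Longrightarrow> v \<le> n \<Longrightarrow>
        matching_pattern n (p S) (A S) (B S) u v = matching_pattern n (p S') (A S') (B S') u v"
    have "p S = p S'"
      using not_less[OF same] not_less same by (metis linorder_neqE_nat)
    moreover have "card S \<le> n - 1" "card S' \<le> n - 1"
      using SS' card_mono[of "{1..n - 1}"] by auto
    ultimately have "card S = card S'"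
      unfolding p_def by auto
    then show "S = S'"
      using matching_split_determines[of S "n - 1" S' n] SS' same unfolding p_def A_def B_def by auto
  qed simp
  then show ?thesis
    by (simp add: card_Pow)
qed

text \<open>If \<open>xx = yy = xy\<close>, the graphs are plain matchings, so the matched vertices are visible
  and can be prescribed freely, up to parity.\<close>

lemma matched_vertices_visible:
  assumes "xx = xy" "yy = xy" "matching_config n p A B" "w \<in> {1..n}"
  shows "w \<in> A \<or> p < w \<and> tail_index asc p n w \<in> B \<longleftrightarrow> (\<exists>w'\<in>{1..n}.
    w < w' \<and> matching_pattern n p A B w w' \<noteq> xy \<or> w' < w \<and> matching_pattern n p A B w' w \<noteq> xy)"
proof -
  have not_ga: "matching_pattern n p A B u v \<noteq> xy \<longleftrightarrow> u \<le> p \<and> p < v \<and> matched n p A B u v" for u v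
    using assms(1,2) unfolding matching_pattern_def by auto
  have "A \<subseteq> {1..p}" "p \<le> n"
    using assms(3) unfolding matching_config_def by simp_all
  show ?thesis
  proof
    assume "w \<in> A \<or> p < w \<and> tail_index asc p n w \<in> B"
    then show "\<exists>w'\<in>{1..n}. w < w' \<and> matching_pattern n p A B w w' \<noteq> xy \<or>
        w' < w \<and> matching_pattern n p A B w' w \<noteq> xy"
    proof
      assume "w \<in> A"
      then obtain v where "v \<in> {p + 1..n}" "matched n p A B w v"
        using matched_partner(1)[OF assms(3)] by blast
      then show ?thesis
        using \<open>w \<in> A\<close> \<open>A \<subseteq> {1..p}\<close> not_ga[of w v] by (intro bexI[of _ v]) auto
    next
      assume "p < w \<and> tail_index asc p n w \<in> B"
      moreover have "w \<in> {p + 1..n}"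
        using calculation assms(4) by auto
      ultimately obtain u where "u \<in> {1..p}" "matched n p A B u w"
        using matched_partner(2)[OF assms(3)] by blast
      then show ?thesis
        using \<open>p < w \<and> _\<close> \<open>p \<le> n\<close> not_ga[of u w] by (intro bexI[of _ u]) auto
    qed
  qed (use not_ga in \<open>auto simp: matched_def\<close>)
qed

lemma exists_half_count:
  assumes "U \<subseteq> {1..n}"
  shows "\<exists>p\<le>n. count_upto U p = card U div 2"
proof (cases "card U div 2 = 0")
  case True
  then show ?thesis
    by (intro exI[of _ 0]) (simp add: count_upto_def)
next
  case False
  then have "card U div 2 \<in> count_upto U ` U"
    using count_upto_image[OF assms] by auto
  then show ?thesis
    using assms by fastforce
qed

lemma card_slice_ge_pure_matching:
  assumes "hereditary P" "(N, E) \<in> P" "1 \<le> n" "(n + 1) * (n + 1) \<le> M" "xx = xy" "yy = xy"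
  shows "2 ^ (n - 1) \<le> card (slice P n)"
proof -
  define U where "U T = (if even (card T) then T else insert n T)" for T :: "nat set"
  define p where "p T = (SOME q. q \<le> n \<and> count_upto (U T) q = card (U T) div 2)" for T
  define A where "A T = U T \<inter> {1..p T}" for T
  define B where "B T = tail_index asc (p T) n ` (U T \<inter> {p T + 1..n})" for T
  have U: "U T \<subseteq> {1..n}" "even (card (U T))" "U T \<inter> {1..n - 1} = T" if "T \<in> Pow {1..n - 1}" for T
  proof -
    have "finite T" "n \<notin> T"
      using that finite_subset assms(3) by auto
    then show "U T \<subseteq> {1..n}" "even (card (U T))" "U T \<inter> {1..n - 1} = T"
      using that assms(3) unfolding U_def by (auto simp: subset_iff)
  qed
  have p: "p T \<le> n" "count_upto (U T) (p T) = card (U T) div 2" if "T \<in> Pow {1..n - 1}" for T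
    using someI_ex[OF exists_half_count[OF U(1)[OF that]]] unfolding p_def by auto
  have config: "matching_config n (p T) (A T) (B T)" if "T \<in> Pow {1..n - 1}" for T
    unfolding A_def B_def by (rule matching_config_halves) (use U p that in auto)
  have visible: "w \<in> U T \<longleftrightarrow> w \<in> A T \<or> p T < w \<and> tail_index asc (p T) n w \<in> B T"
    if "T \<in> Pow {1..n - 1}" "w \<in> {1..n}" for T w
  proof -
    have "tail_index asc (p T) n w \<in> B T \<longleftrightarrow> w \<in> U T" if "w \<in> {p T + 1..n}"
      unfolding B_def using inj_on_image_mem_iff[OF bij_betw_imp_inj_on[OF bij_betw_tail_index] that,
        where A = "U T \<inter> {p T + 1..n}"] that by auto
    then show ?thesis
      using that(2) unfolding A_def by (cases "w \<le> p T") auto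
  qed
  have "card (Pow {1..n - 1}) \<le> card (slice P n)"
  proof (rule card_slice_ge_matching_family[OF assms(1,2,4) _ config])
    fix T T' assume T: "T \<in> Pow {1..n - 1}" "T' \<in> Pow {1..n - 1}"
      and same: "\<And>u v. 1 \<le> u \<Longrightarrow> u < v \<Longrightarrow> v \<le> n \<Longrightarrow>
        matching_pattern n (p T) (A T) (B T) u v = matching_pattern n (p T') (A T') (B T') u v"
    have "w \<in> U T \<longleftrightarrow> w \<in> U T'" if "w \<in> {1..n}" for w
      unfolding visible[OF T(1) that] visible[OF T(2) that]
        matched_vertices_visible[OF assms(5,6) config[OF T(1)] that]
        matched_vertices_visible[OF assms(5,6) config[OF T(2)] that]
      using same that by auto
    then have "U T \<inter> {1..n - 1} = U T' \<inter> {1..n - 1}"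
      by fastforce
    then show "T = T'"
      using U(3)[OF T(1)] U(3)[OF T(2)] by simp
  qed simp
  then show ?thesis
    by (simp add: card_Pow)
qed

lemma card_slice_ge_matching:
  assumes "hereditary P" "(N, E) \<in> P" "1 \<le> n" "(n + 1) * (n + 1) \<le> M"
  shows "2 ^ (n - 1) \<le> card (slice P n)"
proof (cases "xx = xy \<and> yy = xy")
  case True
  then show ?thesis
    using card_slice_ge_pure_matching[OF assms] by simp
next
  case False
  then show ?thesis
    using card_slice_ge_matching_first_unmatched[OF assms]
      card_slice_ge_matching_last_unmatched[OF assms] by blast
qed

end

section \<open>Canonical structures inside a Type 2 structure\<close>

locale alternating_chains =
  fixes k N :: nat and E :: "nat set set" and asc :: bool and x y :: "nat \<Rightarrow> nat"
  assumes x_range: "x ` {1..2*k} \<subseteq> {1..N}" and y_range: "y ` {1..2*k} \<subseteq> {1..N}"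
    and x_mono: "strict_mono_on {1..2*k} x"
    and y_mono: "if asc then strict_mono_on {1..2*k} y else strict_antimono_on {1..2*k} y"
    and x_less_y: "i \<in> {1..2*k} \<Longrightarrow> j \<in> {1..2*k} \<Longrightarrow> x i < y j"
    and alternating: "i \<in> {1..<2*k} \<Longrightarrow> {x i, y i} \<in> E \<longleftrightarrow> {x (i + 1), y (i + 1)} \<notin> E"

lemma kstruct2_alternating_chains:
  assumes "kstruct2 k N E"
  obtains asc x y where "alternating_chains k N E asc x y"
proof -
  from assms consider "kstruct2a k N E" | "kstruct2b k N E"
    unfolding kstruct2_def by blast
  then show ?thesis
  proof cases
    case 1
    then obtain x y where xy: "x ` {1..2*k} \<subseteq> {1..N}" "y ` {1..2*k} \<subseteq> {1..N}"
      "strict_mono_on {1..2*k} x" "strict_mono_on {1..2*k} y" "x (2*k) < y 1"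
      "\<forall>i\<in>{1..<2*k}. {x i, y i} \<in> E \<longleftrightarrow> {x (i+1), y (i+1)} \<notin> E"
      unfolding kstruct2a_def by blast
    have "x i < y j" if "i \<in> {1..2*k}" "j \<in> {1..2*k}" for i j
      using strict_mono_on_bounds[OF xy(3) that(1)] strict_mono_on_bounds[OF xy(4) that(2)] xy(5)
      by linarith
    then have "alternating_chains k N E True x y"
      using xy by unfold_locales auto
    then show ?thesis
      by (rule that)
  next
    case 2
    then obtain x y where xy: "x ` {1..2*k} \<subseteq> {1..N}" "y ` {1..2*k} \<subseteq> {1..N}"
      "strict_mono_on {1..2*k} x" "strict_antimono_on {1..2*k} y" "x (2*k) < y (2*k)"
      "\<forall>i\<in>{1..<2*k}. {x i, y i} \<in> E \<longleftrightarrow> {x (i+1), y (i+1)} \<notin> E"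
      unfolding kstruct2b_def by blast
    have "x i < y j" if "i \<in> {1..2*k}" "j \<in> {1..2*k}" for i j
      using strict_mono_on_bounds[OF xy(3) that(1)] strict_antimono_on_bounds[OF xy(4) that(2)] xy(5)
      by linarith
    then have "alternating_chains k N E False x y"
      using xy by unfold_locales auto
    then show ?thesis
      by (rule that)
  qed
qed

lemma kstruct1_of_alternating_star:
  assumes "v \<in> {1..N}" "w ` {1..2*L} \<subseteq> {1..N}" "strict_mono_on {1..2*L} w"
    and "v < w 1 \<or> w (2*L) < v"
    and "\<And>i. i \<in> {1..2*L} \<Longrightarrow> {v, w i} \<in> E \<longleftrightarrow> (odd i \<longleftrightarrow> D)"
  shows "kstruct1 L N E"
  unfolding kstruct1_def
proof (intro exI[of _ v] exI[of _ w] conjI)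
  show "\<forall>i\<in>{1..<2*L}. {v, w i} \<in> E \<longleftrightarrow> {v, w (i + 1)} \<notin> E"
    using assms(5) by auto
qed (use assms in auto)

text \<open>Type 2 structures are cut into blocks \<open>{2t + 1, 2t + 2}\<close>, on which the diagonal
  alternates.\<close>

definition block_pos :: "nat \<Rightarrow> bool \<Rightarrow> nat" where
  "block_pos t c = 2 * t + (if c then 2 else 1)"

lemma block_pos_less: "t < s \<Longrightarrow> block_pos t c < block_pos s c'"
  unfolding block_pos_def by auto

lemma half_index_range:
  fixes i L :: nat
  shows "i \<in> {1..2*L} \<Longrightarrow> (i + 1) div 2 \<in> {1..L}"
  by auto

lemma half_index_cases:
  fixes i j :: nat
  assumes "i < j"
  shows "(i + 1) div 2 < (j + 1) div 2 \<or> (i + 1) div 2 = (j + 1) div 2 \<and> odd i \<and> even j"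
proof (cases "(i + 1) div 2 < (j + 1) div 2")
  case False
  then have same: "(i + 1) div 2 = (j + 1) div 2"
    using div_le_mono[of "i + 1" "j + 1" 2] assms by linarith
  have "i + 1 = 2 * ((i + 1) div 2) + (i + 1) mod 2" "j + 1 = 2 * ((j + 1) div 2) + (j + 1) mod 2"
    by simp_all
  then have "(i + 1) mod 2 = 0" "(j + 1) mod 2 = 1"
    using same assms by presburger+
  then show ?thesis
    using same by presburger
qed simp

lemma interleaved_block_pos_strict_mono:
  fixes g :: "nat \<Rightarrow> nat"
  assumes "strict_mono_on {1..L} g"
  shows "strict_mono_on {1..2*L} (\<lambda>i. block_pos (g ((i + 1) div 2)) (even i))"
proof (rule strict_mono_onI)
  fix i j assume ij: "i \<in> {1..2*L}" "j \<in> {1..2*L}" "i < j"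
  consider "(i + 1) div 2 < (j + 1) div 2" | "(i + 1) div 2 = (j + 1) div 2" "odd i" "even j"
    using half_index_cases[OF ij(3)] by blast
  then show "block_pos (g ((i + 1) div 2)) (even i) < block_pos (g ((j + 1) div 2)) (even j)"
  proof cases
    case 1
    then have "g ((i + 1) div 2) < g ((j + 1) div 2)"
      using half_index_range ij by (intro strict_mono_onD[OF assms]) auto
    then show ?thesis
      by (rule block_pos_less)
  next
    case 2
    then show ?thesis
      unfolding 2(1) by (simp add: block_pos_def)
  qed
qed

lemma interleaved_block_pos_strict_antimono:
  fixes g :: "nat \<Rightarrow> nat"
  assumes "strict_antimono_on {1..L} g"
  shows "strict_antimono_on {1..2*L} (\<lambda>i. block_pos (g ((i + 1) div 2)) (odd i))"
proof (rule monotone_onI)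
  fix i j assume ij: "i \<in> {1..2*L}" "j \<in> {1..2*L}" "i < j"
  consider "(i + 1) div 2 < (j + 1) div 2" | "(i + 1) div 2 = (j + 1) div 2" "odd i" "even j"
    using half_index_cases[OF ij(3)] by blast
  then show "block_pos (g ((i + 1) div 2)) (odd i) > block_pos (g ((j + 1) div 2)) (odd j)"
  proof cases
    case 1
    moreover have "(i + 1) div 2 \<in> {1..L}" "(j + 1) div 2 \<in> {1..L}"
      using half_index_range ij by auto
    ultimately have "g ((j + 1) div 2) < g ((i + 1) div 2)"
      using assms unfolding monotone_on_def by blast
    then show ?thesis
      by (rule block_pos_less)
  next
    case 2
    then show ?thesis
      unfolding 2(1) by (simp add: block_pos_def)
  qed
qed

context alternating_chains
begin

lemma diagonal_parity:
  assumes "i \<in> {1..2*k}"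
  shows "{x i, y i} \<in> E \<longleftrightarrow> (odd i \<longleftrightarrow> {x 1, y 1} \<in> E)"
  using assms
proof (induction i)
  case (Suc i)
  then show ?case
    using alternating[of i] by (cases "i = 0") auto
qed simp

definition block_colour :: "nat \<Rightarrow> nat \<Rightarrow> bool \<Rightarrow> bool \<Rightarrow> bool \<times> bool \<times> bool \<times> bool" where
  "block_colour t s c c' =
    ({x (block_pos t c), x (block_pos s c')} \<in> E, {y (block_pos t c), y (block_pos s c')} \<in> E,
     {x (block_pos t c), y (block_pos s c')} \<in> E, {y (block_pos t c), x (block_pos s c')} \<in> E)"

end

locale homogeneous_blocks = alternating_chains +
  fixes m :: nat and h :: "nat \<Rightarrow> nat" and C :: "bool \<Rightarrow> bool \<Rightarrow> bool \<times> bool \<times> bool \<times> bool"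
  assumes h_mono: "strict_mono_on {1..m} h" and h_range: "h ` {1..m} \<subseteq> {..<k}"
    and homogeneous: "a \<in> {1..m} \<Longrightarrow> b \<in> {1..m} \<Longrightarrow> a < b \<Longrightarrow> block_colour (h a) (h b) = C"
begin

definition X :: "bool \<Rightarrow> nat \<Rightarrow> nat" where
  "X c j = x (block_pos (h j) c)"

definition Y :: "bool \<Rightarrow> nat \<Rightarrow> nat" where
  "Y c j = y (block_pos (h j) c)"

definition XX :: "bool \<Rightarrow> bool \<Rightarrow> bool" where "XX c c' = fst (C c c')"
definition YY :: "bool \<Rightarrow> bool \<Rightarrow> bool" where "YY c c' = fst (snd (C c c'))"
definition XY :: "bool \<Rightarrow> bool \<Rightarrow> bool" where "XY c c' = fst (snd (snd (C c c')))"
definition YX :: "bool \<Rightarrow> bool \<Rightarrow> bool" where "YX c c' = snd (snd (snd (C c c')))"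

lemma block_pos_mem: "j \<in> {1..m} \<Longrightarrow> block_pos (h j) c \<in> {1..2*k}"
  using h_range unfolding block_pos_def by force

lemma block_pos_h_less:
  "a \<in> {1..m} \<Longrightarrow> b \<in> {1..m} \<Longrightarrow> a < b \<Longrightarrow> block_pos (h a) c < block_pos (h b) c'"
  using strict_mono_onD[OF h_mono] block_pos_less by blast

lemma block_edges:
  assumes "a \<in> {1..m}" "b \<in> {1..m}" "a < b"
  shows "{X c a, X c' b} \<in> E \<longleftrightarrow> XX c c'" "{Y c a, Y c' b} \<in> E \<longleftrightarrow> YY c c'"
    "{X c a, Y c' b} \<in> E \<longleftrightarrow> XY c c'" "{Y c a, X c' b} \<in> E \<longleftrightarrow> YX c c'"
proof -
  have "C c c' = block_colour (h a) (h b) c c'"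
    using homogeneous[OF assms] by simp
  then show "{X c a, X c' b} \<in> E \<longleftrightarrow> XX c c'" "{Y c a, Y c' b} \<in> E \<longleftrightarrow> YY c c'"
    "{X c a, Y c' b} \<in> E \<longleftrightarrow> XY c c'" "{Y c a, X c' b} \<in> E \<longleftrightarrow> YX c c'"
    unfolding block_colour_def X_def Y_def XX_def YY_def XY_def YX_def by simp_all
qed

lemma diagonal_block: "j \<in> {1..m} \<Longrightarrow> {X c j, Y c j} \<in> E \<longleftrightarrow> (c \<longleftrightarrow> {x 1, y 1} \<notin> E)"
  using diagonal_parity[OF block_pos_mem, of j c] unfolding X_def Y_def block_pos_def by auto

lemma chains_of_blocks: "homogeneous_chains asc E N m (X c) (Y c) (XX c c) (YY c c) (XY c c) (YX c c)"
proof
  show "X c ` {1..m} \<subseteq> {1..N}" "Y c ` {1..m} \<subseteq> {1..N}"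
    using x_range y_range block_pos_mem unfolding X_def Y_def by blast+
  show "strict_mono_on {1..m} (X c)"
    unfolding X_def using block_pos_mem block_pos_h_less strict_mono_onD[OF x_mono]
    by (intro strict_mono_onI) blast
  show "if asc then strict_mono_on {1..m} (Y c) else strict_antimono_on {1..m} (Y c)"
    using y_mono block_pos_mem block_pos_h_less unfolding Y_def
    by (auto intro!: strict_mono_onI monotone_onI simp: monotone_on_def)
  show "X c a < Y c b" if "a \<in> {1..m}" "b \<in> {1..m}" for a b
    unfolding X_def Y_def using that block_pos_mem x_less_y by blast
qed (use block_edges in \<open>auto simp: insert_commute\<close>)

lemma X_less_Y: "a \<in> {1..m} \<Longrightarrow> b \<in> {1..m} \<Longrightarrow> X c a < Y c' b"
  unfolding X_def Y_def using block_pos_mem x_less_y by blast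

lemma X_mem: "j \<in> {1..m} \<Longrightarrow> X c j \<in> {1..N}"
  unfolding X_def using block_pos_mem x_range by blast

lemma Y_mem: "j \<in> {1..m} \<Longrightarrow> Y c j \<in> {1..N}"
  unfolding Y_def using block_pos_mem y_range by blast

text \<open>The last \<open>Y\<close>-vertex sees the interleaved \<open>X\<close>-chains of the earlier blocks.\<close>

lemma kstruct1_of_XY_first:
  assumes "XY False c' \<noteq> XY True c'" "2 \<le> m"
  shows "kstruct1 (m - 1) N E"
proof -
  define pos where "pos i = block_pos (h ((i + 1) div 2)) (even i)" for i
  have index: "(i + 1) div 2 \<in> {1..m}" "(i + 1) div 2 < m" if "i \<in> {1..2 * (m - 1)}" for i
    using half_index_range[OF that] by auto
  have "strict_mono_on {1..m - 1} h"
    using h_mono by (rule monotone_on_subset) auto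
  then have "strict_mono_on {1..2 * (m - 1)} pos"
    unfolding pos_def by (rule interleaved_block_pos_strict_mono)
  moreover have "pos ` {1..2 * (m - 1)} \<subseteq> {1..2 * k}"
    unfolding pos_def using block_pos_mem index(1) by blast
  ultimately have "strict_mono_on {1..2 * (m - 1)} (x \<circ> pos)"
    by (rule monotone_on_o[OF x_mono])
  moreover have "x \<circ> pos = (\<lambda>i. X (even i) ((i + 1) div 2))"
    unfolding pos_def X_def by (simp add: fun_eq_iff)
  ultimately have mono: "strict_mono_on {1..2 * (m - 1)} (\<lambda>i. X (even i) ((i + 1) div 2))"
    by simp
  show ?thesis
  proof (rule kstruct1_of_alternating_star[where D = "XY False c'"])
    show "Y c' m \<in> {1..N}"
      using Y_mem assms(2) by simp
    show "(\<lambda>i. X (even i) ((i + 1) div 2)) ` {1..2 * (m - 1)} \<subseteq> {1..N}"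
      using X_mem index(1) by blast
    show "Y c' m < X (even 1) ((1 + 1) div 2) \<or>
        X (even (2 * (m - 1))) ((2 * (m - 1) + 1) div 2) < Y c' m"
      using X_less_Y index(1)[of "2 * (m - 1)"] assms(2) by simp
    show "{Y c' m, X (even i) ((i + 1) div 2)} \<in> E \<longleftrightarrow> (odd i \<longleftrightarrow> XY False c')"
      if "i \<in> {1..2 * (m - 1)}" for i
      using block_edges(3)[of "(i + 1) div 2" m "even i" c'] index[OF that] assms
      by (cases "even i") (auto simp: insert_commute)
  qed (rule mono)
qed

text \<open>The first \<open>X\<close>-vertex sees the interleaved \<open>Y\<close>-chains of the later blocks, read in
  increasing order of position.\<close>

lemma kstruct1_of_XY_second:
  assumes "XY c False \<noteq> XY c True" "2 \<le> m"
  shows "kstruct1 (m - 1) N E"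
proof -
  define b where "b i = (if asc then (i + 1) div 2 + 1 else m + 1 - (i + 1) div 2)" for i
  define pos where "pos i = block_pos (h (b i)) (odd i \<noteq> asc)" for i
  have index: "b i \<in> {1..m}" "1 < b i" if "i \<in> {1..2 * (m - 1)}" for i
    using half_index_range[OF that] unfolding b_def by auto
  have pos_range: "pos ` {1..2 * (m - 1)} \<subseteq> {1..2 * k}"
    unfolding pos_def using block_pos_mem index(1) by blast
  have "strict_mono_on {1..2 * (m - 1)} (y \<circ> pos)"
  proof (cases asc)
    case True
    have "strict_mono_on {1..m - 1} (\<lambda>j. h (j + 1))"
      using strict_mono_onD[OF h_mono] by (intro strict_mono_onI) auto
    then have "strict_mono_on {1..2 * (m - 1)} pos"
      using interleaved_block_pos_strict_mono[where g = "\<lambda>j. h (j + 1)"] True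
      unfolding pos_def b_def by simp
    then show ?thesis
      using monotone_on_o[OF _ _ pos_range, of "(<)" "(<)" y] y_mono True by simp
  next
    case False
    have "strict_antimono_on {1..m - 1} (\<lambda>j. h (m + 1 - j))"
      using strict_mono_onD[OF h_mono] by (intro monotone_onI) auto
    then have "strict_antimono_on {1..2 * (m - 1)} pos"
      using interleaved_block_pos_strict_antimono[where g = "\<lambda>j. h (m + 1 - j)"] False
      unfolding pos_def b_def by simp
    moreover have "monotone_on {1..2 * k} (>) (<) y"
      using y_mono False by (auto simp: monotone_on_def)
    ultimately show ?thesis
      using monotone_on_o[OF _ _ pos_range, of "(>)" "(<)" y "(<)"] by simp
  qed
  moreover have "y \<circ> pos = (\<lambda>i. Y (odd i \<noteq> asc) (b i))"
    unfolding pos_def Y_def by (simp add: fun_eq_iff)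
  ultimately have mono: "strict_mono_on {1..2 * (m - 1)} (\<lambda>i. Y (odd i \<noteq> asc) (b i))"
    by simp
  show ?thesis
  proof (rule kstruct1_of_alternating_star[where D = "XY c (\<not> asc)"])
    show "X c 1 \<in> {1..N}"
      using X_mem assms(2) by simp
    show "(\<lambda>i. Y (odd i \<noteq> asc) (b i)) ` {1..2 * (m - 1)} \<subseteq> {1..N}"
      using Y_mem index(1) by blast
    show "X c 1 < Y (odd 1 \<noteq> asc) (b 1) \<or> Y (odd (2 * (m - 1)) \<noteq> asc) (b (2 * (m - 1))) < X c 1"
      using X_less_Y index(1)[of 1] assms(2) by simp
    show "{X c 1, Y (odd i \<noteq> asc) (b i)} \<in> E \<longleftrightarrow> (odd i \<longleftrightarrow> XY c (\<not> asc))"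
      if "i \<in> {1..2 * (m - 1)}" for i
      using block_edges(3)[of 1 "b i" c "odd i \<noteq> asc"] index[OF that] assms
      by (cases asc; cases "even i") auto
  qed (rule mono)
qed

lemma canonical_structure:
  assumes "2 \<le> m"
  shows "kstruct1 (m - 1) N E \<or>
    (\<exists>asc X Y xx yy xy yx. homogeneous_chains asc E N m X Y xx yy xy yx \<and> xy \<noteq> yx) \<or>
    (\<exists>asc X Y xx yy xy. matching_chains asc E N m X Y xx yy xy xy)"
proof -
  consider c' where "XY False c' \<noteq> XY True c'" | c where "XY c False \<noteq> XY c True"
    | "\<And>c c'. XY c c' = XY False False"
    by (metis (full_types))
  then show ?thesis
  proof cases
    case 1
    then show ?thesis
      using kstruct1_of_XY_first assms by blast
  next
    case 2
    then show ?thesis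
      using kstruct1_of_XY_second assms by blast
  next
    case 3
    show ?thesis
    proof (cases "\<exists>c. XY c c \<noteq> YX c c")
      case True
      then show ?thesis
        using chains_of_blocks by blast
    next
      case False
      define c where "c = ({x 1, y 1} \<in> E \<longleftrightarrow> XY False False)"
      have "YX c c = XY c c"
        using False by blast
      then have "homogeneous_chains asc E N m (X c) (Y c) (XX c c) (YY c c) (XY c c) (XY c c)"
        using chains_of_blocks[of c] by simp
      then have "matching_chains asc E N m (X c) (Y c) (XX c c) (YY c c) (XY c c) (XY c c)"
        unfolding matching_chains_def matching_chains_axioms_def
        using diagonal_block 3 unfolding c_def by auto
      then show ?thesis
        by blast
    qed
  qed
qed

end

lemma strict_mono_enumeration:
  assumes "finite H" "card H = m"
  obtains h :: "nat \<Rightarrow> 'a::wellorder" where "strict_mono_on {1..m} h" "h ` {1..m} \<subseteq> H"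
proof
  show "strict_mono_on {1..m} (\<lambda>j. enumerate H (j - 1))"
    using assms by (intro strict_mono_onI finite_enumerate_mono) auto
  show "(\<lambda>j. enumerate H (j - 1)) ` {1..m} \<subseteq> H"
    using assms finite_enumerate_in_set by fastforce
qed

lemma ramsey_pairs:
  fixes m :: nat
  obtains N0 where "\<And>col :: nat \<Rightarrow> nat \<Rightarrow> 'c::finite. \<exists>h C. strict_mono_on {1..m} h \<and>
    h ` {1..m} \<subseteq> {..<N0} \<and> (\<forall>a\<in>{1..m}. \<forall>b\<in>{1..m}. a < b \<longrightarrow> col (h a) (h b) = C)"
proof -
  obtain g :: "'c \<Rightarrow> nat" where g: "bij_betw g UNIV {0..<card (UNIV :: 'c set)}"
    using ex_bij_betw_finite_nat[of "UNIV :: 'c set"] by auto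
  obtain N0 :: nat where N0: "partn_lst {..<N0} (replicate (card (UNIV :: 'c set)) m) 2"
    using ramsey_full[of "replicate (card (UNIV :: 'c set)) m" 2] by blast
  have "\<exists>h C. strict_mono_on {1..m} h \<and> h ` {1..m} \<subseteq> {..<N0} \<and>
      (\<forall>a\<in>{1..m}. \<forall>b\<in>{1..m}. a < b \<longrightarrow> col (h a) (h b) = C)" for col :: "nat \<Rightarrow> nat \<Rightarrow> 'c"
  proof -
    define f where "f A = g (col (Min A) (Max A))" for A
    have "f \<in> nsets {..<N0} 2 \<rightarrow> {..<length (replicate (card (UNIV :: 'c set)) m)}"
      using bij_betw_apply[OF g] unfolding f_def by auto
    then obtain i H where "H \<in> nsets {..<N0} (replicate (card (UNIV :: 'c set)) m ! i)" "i < card (UNIV :: 'c set)"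
      and hom: "f ` nsets H 2 \<subseteq> {i}"
      using partn_lstE[OF N0] by (metis length_replicate)
    then have H: "H \<subseteq> {..<N0}" "finite H" "card H = m"
      unfolding nsets_def by auto
    obtain h where "strict_mono_on {1..m} h" "h ` {1..m} \<subseteq> H"
      using strict_mono_enumeration[OF H(2,3)] .
    moreover have "col (h a) (h b) = inv_into UNIV g i"
      if "a \<in> {1..m}" "b \<in> {1..m}" "a < b" for a b
    proof -
      have "h a < h b"
        using strict_mono_onD[OF \<open>strict_mono_on {1..m} h\<close> that(1,2,3)] .
      moreover have "{h a, h b} \<in> nsets H 2"
        using \<open>h ` {1..m} \<subseteq> H\<close> that \<open>h a < h b\<close> by (auto simp: nsets_def card_insert_if)
      then have "f {h a, h b} = i"
        using hom by blast
      moreover have "Min {h a, h b} = h a" "Max {h a, h b} = h b"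
        using \<open>h a < h b\<close> by auto
      ultimately have "g (col (h a) (h b)) = i"
        unfolding f_def by simp
      then show ?thesis
        using bij_betw_inv_into_left[OF g] by (metis UNIV_I)
    qed
    ultimately show ?thesis
      using H by blast
  qed
  then show ?thesis
    by (rule that)
qed

lemma kstruct2_canonical:
  assumes "2 \<le> m"
  obtains K where "\<And>k N E. K \<le> k \<Longrightarrow> kstruct2 k N E \<Longrightarrow>
    kstruct1 (m - 1) N E \<or>
    (\<exists>asc X Y xx yy xy yx. homogeneous_chains asc E N m X Y xx yy xy yx \<and> xy \<noteq> yx) \<or>
    (\<exists>asc X Y xx yy xy. matching_chains asc E N m X Y xx yy xy xy)"
proof -
  obtain K where K: "\<And>col :: nat \<Rightarrow> nat \<Rightarrow> bool \<Rightarrow> bool \<Rightarrow> bool \<times> bool \<times> bool \<times> bool.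
    \<exists>h C. strict_mono_on {1..m} h \<and> h ` {1..m} \<subseteq> {..<K} \<and>
      (\<forall>a\<in>{1..m}. \<forall>b\<in>{1..m}. a < b \<longrightarrow> col (h a) (h b) = C)"
    using ramsey_pairs by blast
  show ?thesis
  proof (rule that)
    fix k N E assume "K \<le> k" "kstruct2 k N E"
    then obtain asc x y where chains: "alternating_chains k N E asc x y"
      using kstruct2_alternating_chains by blast
    obtain h C where "strict_mono_on {1..m} h" "h ` {1..m} \<subseteq> {..<K}"
      "\<forall>a\<in>{1..m}. \<forall>b\<in>{1..m}. a < b \<longrightarrow> alternating_chains.block_colour E x y (h a) (h b) = C"
      using K by blast
    then have "homogeneous_blocks k N E asc x y m h C"
      using chains \<open>K \<le> k\<close> unfolding homogeneous_blocks_def homogeneous_blocks_axioms_def by force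
    then show "kstruct1 (m - 1) N E \<or>
      (\<exists>asc X Y xx yy xy yx. homogeneous_chains asc E N m X Y xx yy xy yx \<and> xy \<noteq> yx) \<or>
      (\<exists>asc X Y xx yy xy. matching_chains asc E N m X Y xx yy xy xy)"
      by (rule homogeneous_blocks.canonical_structure[OF _ assms])
  qed
qed

lemma card_slice_ge_of_kstruct2:
  assumes "hereditary P" "1 \<le> n"
  obtains K where "\<And>k N E. K \<le> k \<Longrightarrow> (N, E) \<in> P \<Longrightarrow> kstruct2 k N E \<Longrightarrow>
    2 ^ (n - 1) \<le> card (slice P n)"
proof -
  define m where "m = (n + 1) * (n + 1)"
  have "2 \<le> m" "n \<le> m - 1 + 1"
    using assms(2) unfolding m_def by (auto simp: algebra_simps)
  obtain K where K: "\<And>k N E. K \<le> k \<Longrightarrow> kstruct2 k N E \<Longrightarrow>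
    kstruct1 (m - 1) N E \<or>
    (\<exists>asc X Y xx yy xy yx. homogeneous_chains asc E N m X Y xx yy xy yx \<and> xy \<noteq> yx) \<or>
    (\<exists>asc X Y xx yy xy. matching_chains asc E N m X Y xx yy xy xy)"
    using kstruct2_canonical[OF \<open>2 \<le> m\<close>] by blast
  show ?thesis
  proof (rule that)
    fix k N E assume "K \<le> k" "(N, E) \<in> P" "kstruct2 k N E"
    then have "kstruct1 (m - 1) N E \<or>
      (\<exists>asc X Y xx yy xy yx. homogeneous_chains asc E N m X Y xx yy xy yx \<and> xy \<noteq> yx) \<or>
      (\<exists>asc X Y xx yy xy. matching_chains asc E N m X Y xx yy xy xy)"
      using K by blast
    then show "2 ^ (n - 1) \<le> card (slice P n)"
    proof (elim disjE exE conjE)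
      assume "kstruct1 (m - 1) N E"
      then show ?thesis
        using card_slice_ge_of_kstruct1[OF assms(1) \<open>(N, E) \<in> P\<close> _ assms(2) \<open>n \<le> m - 1 + 1\<close>] by blast
    next
      fix asc X Y xx yy xy yx assume "homogeneous_chains asc E N m X Y xx yy xy yx" "xy \<noteq> yx"
      then show ?thesis
        using homogeneous_chains.card_slice_ge_threshold[OF _ assms(1) \<open>(N, E) \<in> P\<close> _ assms(2)] m_def by blast
    next
      fix asc X Y xx yy xy assume "matching_chains asc E N m X Y xx yy xy xy"
      then show ?thesis
        using matching_chains.card_slice_ge_matching[OF _ assms(1) \<open>(N, E) \<in> P\<close> assms(2)] m_def
        by blast
    qed
  qed
qed

theorem lemma5:
  fixes P :: "(nat \<times> nat set set) set"
  assumes "hereditary P"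
    and "\<forall>K. \<exists>k \<ge> K. \<exists>(n, E) \<in> P. kstruct1 k n E \<or> kstruct2 k n E"
    and "n \<ge> 1"
  shows "card (slice P n) \<ge> 2 ^ (n - 1)"
proof -
  obtain K where K: "\<And>k N E. K \<le> k \<Longrightarrow> (N, E) \<in> P \<Longrightarrow> kstruct2 k N E \<Longrightarrow>
      2 ^ (n - 1) \<le> card (slice P n)"
    using card_slice_ge_of_kstruct2[OF assms(1,3)] by blast
  obtain k N E where "max K n \<le> k" "(N, E) \<in> P" "kstruct1 k N E \<or> kstruct2 k N E"
    using assms(2) by blast
  then show ?thesis
    using card_slice_ge_of_kstruct1[OF assms(1) _ _ assms(3)] K by force
qed

end
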